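(* Let $H$ be a complex Hilbert space, $A\in B(H)$ a nonzero positive semidefinite operator with closed range, and $T\in B_{A^{1/2}}(H)$. Then every $\lambda\in\mathbb C$ with $|\lambda|>\|T\|_A$ belongs to $\rho_A(T)$.
   Context: $\|x\|_A=\langle Ax,x\rangle^{1/2}$. For $S\in B(H)$, $\|S\|_A=\sup\{\|Sx\|_A : x\in\overline{R(A)},\ \|x\|_A=1\}$. $B_{A^{1/2}}(H)=\{S\in B(H): R(S^*A^{1/2})\subset R(A^{1/2})\}$. $S\in B_{A^{1/2}}(H)$ is $A$-invertible in $B_{A^{1/2}}(H)$ if there is a nonzero $R\in B_{A^{1/2}}(H)$ with $ASR=ARS=A$; $\rho_A(S)=\{\lambda\in\mathbb C:\lambda I-S$ is $A$-invertible in $B_{A^{1/2}}(H)\}$. *)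

theory Defs
  imports "HOL-Analysis.Analysis"
begin

class chilbert_space = real_normed_vector + complete_space +
  fixes scaleC :: "complex \<Rightarrow> 'a \<Rightarrow> 'a"
    and cinner :: "'a \<Rightarrow> 'a \<Rightarrow> complex"
  assumes scaleC_add_right: "scaleC a (x + y) = scaleC a x + scaleC a y"
    and scaleC_add_left: "scaleC (a + b) x = scaleC a x + scaleC b x"
    and scaleC_scaleC: "scaleC a (scaleC b x) = scaleC (a * b) x"
    and scaleC_one: "scaleC 1 x = x"
    and scaleC_of_real: "scaleC (complex_of_real r) x = scaleR r x"
    and cinner_commute: "cinner x y = cnj (cinner y x)"
    and cinner_add_left: "cinner (x + y) z = cinner x z + cinner y z"
    and cinner_scaleC_left: "cinner (scaleC a x) y = a * cinner x y"
    and cinner_self_real: "Im (cinner x x) = 0"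
    and cinner_self_nonneg: "0 \<le> Re (cinner x x)"
    and cinner_self_eq_zero: "cinner x x = 0 \<longleftrightarrow> x = 0"
    and norm_eq_sqrt_cinner: "norm x = sqrt (Re (cinner x x))"

definition bounded_op :: "('a::chilbert_space \<Rightarrow> 'a) \<Rightarrow> bool" where
  "bounded_op S \<longleftrightarrow>
     (\<forall>x y. S (x + y) = S x + S y) \<and>
     (\<forall>c x. S (scaleC c x) = scaleC c (S x)) \<and>
     (\<exists>K. \<forall>x. norm (S x) \<le> norm x * K)"

definition adjoint :: "('a::chilbert_space \<Rightarrow> 'a) \<Rightarrow> ('a \<Rightarrow> 'a)" where
  "adjoint S = (THE T. \<forall>x y. cinner (S x) y = cinner x (T y))"

definition positive_op :: "('a::chilbert_space \<Rightarrow> 'a) \<Rightarrow> bool" where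
  "positive_op A \<longleftrightarrow> bounded_op A \<and>
     (\<forall>x. Im (cinner (A x) x) = 0 \<and> 0 \<le> Re (cinner (A x) x))"

definition op_sqrt :: "('a::chilbert_space \<Rightarrow> 'a) \<Rightarrow> ('a \<Rightarrow> 'a)" where
  "op_sqrt A = (THE B. positive_op B \<and> B \<circ> B = A)"

definition A_norm :: "('a::chilbert_space \<Rightarrow> 'a) \<Rightarrow> 'a \<Rightarrow> real" where
  "A_norm A x = sqrt (Re (cinner (A x) x))"

definition A_opnorm :: "('a::chilbert_space \<Rightarrow> 'a) \<Rightarrow> ('a \<Rightarrow> 'a) \<Rightarrow> real" where
  "A_opnorm A S = Sup {A_norm A (S x) | x. x \<in> closure (range A) \<and> A_norm A x = 1}"

definition B_Ahalf :: "('a::chilbert_space \<Rightarrow> 'a) \<Rightarrow> ('a \<Rightarrow> 'a) set" where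
  "B_Ahalf A = {S. bounded_op S \<and> range (adjoint S \<circ> op_sqrt A) \<subseteq> range (op_sqrt A)}"

definition A_invertible :: "('a::chilbert_space \<Rightarrow> 'a) \<Rightarrow> ('a \<Rightarrow> 'a) \<Rightarrow> bool" where
  "A_invertible A S \<longleftrightarrow> S \<in> B_Ahalf A \<and>
     (\<exists>R \<in> B_Ahalf A. R \<noteq> (\<lambda>x. 0) \<and> A \<circ> S \<circ> R = A \<and> A \<circ> R \<circ> S = A)"

definition A_resolvent :: "('a::chilbert_space \<Rightarrow> 'a) \<Rightarrow> ('a \<Rightarrow> 'a) \<Rightarrow> complex set" where
  "A_resolvent A S = {l. A_invertible A (\<lambda>x. scaleC l x - S x)}"

end

(*
  Let P be the orthogonal projection onto the closed range of A and U = P T. Since the adjoint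
  of T preserves the range of A^(1/2) and ker A = ker A^(1/2), the kernel of A is T-invariant,
  so P T P = P T. On range A the A-seminorm is equivalent to the norm (bounded inverse theorem),
  and there U has A-norm at most ||T||_A < |l|, so the powers of U decay like (||T||_A / |l|)^n.
  The Neumann series R = (sum n. U^n P / l^(n+1)) then satisfies (l - U) R = P and
  R (l - T) = P, hence A (l - T) R = A R (l - T) = A because A P = A; and R vanishes on ker A,
  which puts it into B_(A^(1/2)).

  Since A^(1/2) is defined by a definite description, existence and uniqueness of positive
  square roots come first; the square root is built from the binomial series of sqrt (1 - t).
*)

theory Submission
  imports Defs "HOL-Computational_Algebra.Formal_Power_Series"
begin

section \<open>Complex inner product spaces\<close>

subclass (in chilbert_space) banach ..

lemma scaleC_zero_left [simp]: "scaleC 0 x = 0"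
  using scaleC_of_real[of 0 x] by simp

lemma scaleC_zero_right [simp]: "scaleC a 0 = 0"
  using scaleC_add_right[of a 0 0] by simp

lemma scaleC_minus_right: "scaleC a (- x) = - scaleC a x"
  using minus_unique[of "scaleC a x" "scaleC a (- x)"] scaleC_add_right[of a x "- x"] by simp

lemma scaleC_diff_right: "scaleC a (x - y) = scaleC a x - scaleC a y"
  using scaleC_add_right[of a x "- y"] by (simp add: scaleC_minus_right)

lemma scaleC_minus_left: "scaleC (- a) x = - scaleC a x"
  using minus_unique[of "scaleC a x" "scaleC (- a) x"] scaleC_add_left[of a "- a" x] by simp

lemma scaleR_eq_scaleC: "scaleR r x = scaleC (complex_of_real r) x"
  by (simp add: scaleC_of_real)

lemma cinner_zero_left [simp]: "cinner 0 y = 0"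
  using cinner_add_left[of 0 0 y] by simp

lemma cinner_zero_right [simp]: "cinner x 0 = 0"
  using cinner_commute[of x 0] by simp

lemma cinner_minus_left: "cinner (- x) y = - cinner x y"
  using minus_unique[of "cinner x y" "cinner (- x) y"] cinner_add_left[of x "- x" y] by simp

lemma cinner_diff_left: "cinner (x - z) y = cinner x y - cinner z y"
  using cinner_add_left[of x "- z" y] by (simp add: cinner_minus_left)

lemma cinner_add_right: "cinner x (y + z) = cinner x y + cinner x z"
  by (subst (1 2 3) cinner_commute) (simp add: cinner_add_left)

lemma cinner_minus_right: "cinner x (- y) = - cinner x y"
  by (subst (1 2) cinner_commute) (simp add: cinner_minus_left)

lemma cinner_diff_right: "cinner x (y - z) = cinner x y - cinner x z"
  by (subst (1 2 3) cinner_commute) (simp add: cinner_diff_left)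

lemma cinner_scaleC_right: "cinner x (scaleC a y) = cnj a * cinner x y"
  by (subst (1 2) cinner_commute) (simp add: cinner_scaleC_left)

lemma cinner_self: "cinner x x = complex_of_real ((norm x)\<^sup>2)"
  using norm_eq_sqrt_cinner[of x] cinner_self_nonneg[of x] cinner_self_real[of x]
  by (simp add: complex_eq_iff)

lemma norm_scaleC: "norm (scaleC a x) = cmod a * norm x"
proof -
  have "cinner (scaleC a x) (scaleC a x) = (a * cnj a) * cinner x x"
    by (simp add: cinner_scaleC_left cinner_scaleC_right)
  also have "\<dots> = complex_of_real ((cmod a * norm x)\<^sup>2)"
    by (simp add: complex_norm_square[symmetric] cinner_self power_mult_distrib)
  finally have "(norm (scaleC a x))\<^sup>2 = (cmod a * norm x)\<^sup>2"
    by (simp only: cinner_self of_real_eq_iff)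
  then show ?thesis by (simp add: power2_eq_iff_nonneg)
qed

lemma cinner_cauchy_schwarz: "cmod (cinner x y) \<le> norm x * norm y"
proof (cases "y = 0")
  case False
  define c where "c = cinner x y / cinner y y"
  have yy: "cinner y y = complex_of_real ((norm y)\<^sup>2)" by (rule cinner_self)
  have ny: "norm y > 0" using False by simp
  have "0 \<le> Re (cinner (x - scaleC c y) (x - scaleC c y))" by (rule cinner_self_nonneg)
  also have "cinner (x - scaleC c y) (x - scaleC c y)
      = cinner x x - cnj c * cinner x y - c * cinner y x + c * cnj c * cinner y y"
    by (simp add: cinner_diff_left cinner_diff_right cinner_scaleC_left cinner_scaleC_right
        algebra_simps)
  also have "\<dots> = cinner x x - cinner x y * cnj (cinner x y) / complex_of_real ((norm y)\<^sup>2)"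
    using ny by (simp add: c_def yy cinner_commute[of y x] field_simps)
  finally have "0 \<le> (norm x)\<^sup>2 - (cmod (cinner x y))\<^sup>2 / (norm y)\<^sup>2"
    by (simp add: cinner_self complex_norm_square[symmetric] del: of_real_power)
  then have "(cmod (cinner x y))\<^sup>2 \<le> (norm x * norm y)\<^sup>2"
    using ny by (simp add: field_simps power_mult_distrib)
  then show ?thesis by (simp add: abs_le_square_iff)
qed simp

lemma cinner_eq_zeroI: "(\<And>y. cinner x y = 0) \<Longrightarrow> x = 0"
  using cinner_self_eq_zero by blast

lemma cinner_ext_right: "(\<And>y. cinner y x = cinner y z) \<Longrightarrow> x = z"
  using cinner_eq_zeroI[of "x - z"] cinner_commute[of "x - z"]
  by (simp add: cinner_diff_right cinner_diff_left)

lemma bounded_bilinear_cinner: "bounded_bilinear cinner"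
proof
  show "\<exists>K. \<forall>a b. norm (cinner a b) \<le> norm a * norm b * K"
    by (rule exI[of _ 1]) (simp add: cinner_cauchy_schwarz)
qed (simp_all add: cinner_add_left cinner_add_right scaleR_eq_scaleC cinner_scaleC_left
    cinner_scaleC_right scaleR_conv_of_real)

lemma cinner_suminf_left: "summable f \<Longrightarrow> cinner (suminf f) y = (\<Sum>n. cinner (f n) y)"
  using bounded_linear.suminf[OF bounded_bilinear.bounded_linear_left[OF bounded_bilinear_cinner]]
  by metis

lemma cinner_suminf_right: "summable f \<Longrightarrow> cinner y (suminf f) = (\<Sum>n. cinner y (f n))"
  using bounded_linear.suminf[OF bounded_bilinear.bounded_linear_right[OF bounded_bilinear_cinner]]
  by metis

lemma norm_add_square_cinner:
  "(norm (x + y))\<^sup>2 = (norm x)\<^sup>2 + (norm y)\<^sup>2 + 2 * Re (cinner x y)"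
proof -
  have "(norm (x + y))\<^sup>2 = Re (cinner (x + y) (x + y))" by (simp add: cinner_self)
  also have "\<dots> = (norm x)\<^sup>2 + (norm y)\<^sup>2 + Re (cinner x y) + Re (cinner y x)"
    by (simp add: cinner_add_left cinner_add_right) (simp add: cinner_self)
  finally show ?thesis by (simp add: cinner_commute[of y x])
qed

lemma norm_diff_square_cinner:
  "(norm (x - y))\<^sup>2 = (norm x)\<^sup>2 + (norm y)\<^sup>2 - 2 * Re (cinner x y)"
  using norm_add_square_cinner[of x "- y"] by (simp add: cinner_minus_right)

section \<open>Bounded operators\<close>

lemma bounded_op_add: "bounded_op S \<Longrightarrow> S (x + y) = S x + S y"
  unfolding bounded_op_def by blast

lemma bounded_op_scaleC: "bounded_op S \<Longrightarrow> S (scaleC c x) = scaleC c (S x)"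
  unfolding bounded_op_def by blast

lemma bounded_op_scaleR: "bounded_op S \<Longrightarrow> S (scaleR r x) = scaleR r (S x)"
  by (simp add: scaleR_eq_scaleC bounded_op_scaleC)

lemma bounded_op_bounded_linear: "bounded_op S \<Longrightarrow> bounded_linear S"
  unfolding bounded_op_def
  by (auto intro: bounded_linear_intro simp: scaleR_eq_scaleC)

lemma bounded_op_bound: "bounded_op S \<Longrightarrow> \<exists>K>0. \<forall>x. norm (S x) \<le> norm x * K"
  using bounded_linear.pos_bounded[OF bounded_op_bounded_linear] by blast

lemma bounded_op_zero [simp]: "bounded_op S \<Longrightarrow> S 0 = 0"
  using linear_0[OF bounded_linear.linear[OF bounded_op_bounded_linear]] by blast

lemma bounded_op_diff: "bounded_op S \<Longrightarrow> S (x - y) = S x - S y"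
  using linear_diff[OF bounded_linear.linear[OF bounded_op_bounded_linear]] by blast

lemma bounded_op_suminf: "bounded_op S \<Longrightarrow> summable f \<Longrightarrow> S (suminf f) = (\<Sum>n. S (f n))"
  using bounded_linear.suminf[OF bounded_op_bounded_linear] by metis

lemma bounded_opI:
  assumes "bounded_linear S" and "\<And>c x. S (scaleC c x) = scaleC c (S x)"
  shows "bounded_op S"
  using assms bounded_linear.bounded[OF assms(1)] linear_add[OF bounded_linear.linear[OF assms(1)]]
  unfolding bounded_op_def by blast

lemma bounded_linear_scaleC: "bounded_linear (scaleC a)"
  by (rule bounded_linear_intro[of _ "cmod a"])
    (simp_all add: scaleC_add_right scaleR_eq_scaleC scaleC_scaleC mult.commute norm_scaleC)

lemma bounded_op_ident: "bounded_op (\<lambda>x. x)"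
  unfolding bounded_op_def by (auto intro: exI[of _ 1])

lemma bounded_op_scaleC_const: "bounded_op (scaleC a)"
  by (rule bounded_opI[OF bounded_linear_scaleC]) (simp add: scaleC_scaleC mult.commute)

lemma bounded_op_compose:
  assumes "bounded_op S" "bounded_op T"
  shows "bounded_op (\<lambda>x. S (T x))"
proof (rule bounded_opI)
  show "bounded_linear (\<lambda>x. S (T x))"
    using bounded_linear_compose[OF bounded_op_bounded_linear bounded_op_bounded_linear] assms .
qed (simp add: assms bounded_op_scaleC)

lemma bounded_op_funpow: "bounded_op S \<Longrightarrow> bounded_op (S ^^ n)"
proof (induction n)
  case (Suc n)
  then show ?case using bounded_op_compose[of S "S ^^ n"] by (simp add: comp_def)
qed (simp add: bounded_op_ident id_def)

lemma bounded_op_diff_fun: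
  assumes "bounded_op S" "bounded_op T"
  shows "bounded_op (\<lambda>x. S x - T x)"
proof (rule bounded_opI)
  show "bounded_linear (\<lambda>x. S x - T x)"
    using bounded_linear_sub[OF bounded_op_bounded_linear bounded_op_bounded_linear] assms .
qed (simp add: assms bounded_op_scaleC scaleC_diff_right)

lemma norm_funpow_le:
  fixes S :: "'a::real_normed_vector \<Rightarrow> 'a"
  assumes "\<And>x. norm (S x) \<le> norm x"
  shows "norm ((S ^^ k) x) \<le> norm x"
proof (induction k)
  case (Suc k)
  then show ?case using assms[of "(S ^^ k) x"] by simp
qed simp

lemma funpow_commute:
  assumes "\<And>x. B (S x) = S (B x)"
  shows "B ((S ^^ k) x) = (S ^^ k) (B x)"
  by (induction k) (simp_all add: assms)

section \<open>Closed subspaces and orthogonal projections\<close>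

definition csubspace :: "'a::chilbert_space set \<Rightarrow> bool" where
  "csubspace M \<longleftrightarrow> 0 \<in> M \<and> (\<forall>x\<in>M. \<forall>y\<in>M. x + y \<in> M) \<and> (\<forall>c. \<forall>x\<in>M. scaleC c x \<in> M)"

lemma csubspace_diff: "csubspace M \<Longrightarrow> x \<in> M \<Longrightarrow> y \<in> M \<Longrightarrow> x - y \<in> M"
  unfolding csubspace_def
  by (metis (no_types, lifting) diff_conv_add_uminus scaleC_minus_left scaleC_one)

lemma csubspace_range:
  assumes "bounded_op S"
  shows "csubspace (range S)"
  unfolding csubspace_def
proof (intro conjI ballI allI)
  show "0 \<in> range S" using bounded_op_zero[OF assms] by (metis range_eqI)
  show "x + y \<in> range S" if "x \<in> range S" "y \<in> range S" for x y
    using that by (auto simp: bounded_op_add[OF assms, symmetric])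
  show "scaleC c x \<in> range S" if "x \<in> range S" for c x
    using that by (auto simp: bounded_op_scaleC[OF assms, symmetric])
qed

lemma parallelogram_law:
  "(norm (a + b :: 'a::chilbert_space))\<^sup>2 + (norm (a - b))\<^sup>2 = 2 * (norm a)\<^sup>2 + 2 * (norm b)\<^sup>2"
  using norm_add_square_cinner[of a b] norm_diff_square_cinner[of a b] by simp

lemma minimizing_sequence_Cauchy:
  assumes M: "csubspace M" and d: "\<And>y. y \<in> M \<Longrightarrow> d \<le> (norm (x - y))\<^sup>2"
    and m: "\<And>n. m n \<in> M" "\<And>n. (norm (x - m n))\<^sup>2 < d + 1 / (real n + 1)"
  shows "Cauchy m"
proof (rule CauchyI)
  \<comment> \<open>the parallelogram law applied to x - m i and x - m j, whose midpoint lies in M\<close>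
  have dist: "(norm (m i - m j))\<^sup>2 \<le> 2 / (real i + 1) + 2 / (real j + 1)" for i j
  proof -
    have mid: "scaleR (1/2) (m i + m j) \<in> M"
      using M m(1) unfolding csubspace_def by (simp add: scaleR_eq_scaleC)
    have "x - m i + (x - m j) = scaleR 2 (x - scaleR (1/2) (m i + m j))"
      by (simp add: algebra_simps scaleR_2)
    then have "(norm (x - m i + (x - m j)))\<^sup>2 = 4 * (norm (x - scaleR (1/2) (m i + m j)))\<^sup>2"
      by (simp add: power_mult_distrib)
    then have "(norm (m i - m j))\<^sup>2 = 2 * (norm (x - m i))\<^sup>2 + 2 * (norm (x - m j))\<^sup>2
        - 4 * (norm (x - scaleR (1/2) (m i + m j)))\<^sup>2"
      using parallelogram_law[of "x - m i" "x - m j"] by (simp add: norm_minus_commute)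
    then show ?thesis using d[OF mid] m(2)[of i] m(2)[of j] by simp
  qed
  fix e :: real assume e: "0 < e"
  obtain N :: nat where N: "4 / e\<^sup>2 < real N" using reals_Archimedean2 by blast
  have "norm (m i - m j) < e" if "i \<ge> N" "j \<ge> N" for i j
  proof -
    have "2 / (real i + 1) \<le> 2 / (real N + 1)" "2 / (real j + 1) \<le> 2 / (real N + 1)"
      using that by (auto intro!: divide_left_mono)
    then have "(norm (m i - m j))\<^sup>2 \<le> 4 / (real N + 1)" using dist[of i j] by simp
    also have "\<dots> < e\<^sup>2" using N e by (simp add: field_simps) (smt (verit) zero_less_power)
    finally show ?thesis using e by (simp add: power_less_imp_less_base)
  qed
  then show "\<exists>N. \<forall>i\<ge>N. \<forall>j\<ge>N. norm (m i - m j) < e" by blast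
qed

lemma closed_csubspace_nearest_point:
  assumes M: "csubspace M" "closed M"
  shows "\<exists>m\<in>M. \<forall>y\<in>M. norm (x - m) \<le> norm (x - y)"
proof -
  define d where "d = Inf ((\<lambda>m. (norm (x - m))\<^sup>2) ` M)"
  have ne: "M \<noteq> {}" using M unfolding csubspace_def by auto
  have dle: "d \<le> (norm (x - m))\<^sup>2" if "m \<in> M" for m
    unfolding d_def by (rule cInf_lower) (use that in \<open>auto intro: bdd_belowI[of _ 0]\<close>)
  have "\<exists>m\<in>M. (norm (x - m))\<^sup>2 < d + 1 / (real n + 1)" for n
    using cInf_lessD[of "(\<lambda>m. (norm (x - m))\<^sup>2) ` M" "d + 1 / (real n + 1)"] ne
    unfolding d_def by auto
  then obtain m where m: "\<And>n. m n \<in> M" "\<And>n. (norm (x - m n))\<^sup>2 < d + 1 / (real n + 1)"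
    by metis
  obtain m0 where lim: "m \<longlonglongrightarrow> m0"
    using minimizing_sequence_Cauchy[OF M(1) dle m] Cauchy_convergent_iff convergent_def by blast
  have "(\<lambda>n. (norm (x - m n))\<^sup>2) \<longlonglongrightarrow> (norm (x - m0))\<^sup>2"
    by (intro tendsto_intros lim)
  moreover have "(\<lambda>n. d + 1 / (real n + 1)) \<longlonglongrightarrow> d + 0"
    by (intro tendsto_intros)
      (use LIMSEQ_inverse_real_of_nat in \<open>simp add: inverse_eq_divide add.commute\<close>)
  ultimately have m0: "(norm (x - m0))\<^sup>2 \<le> d + 0"
    by (rule LIMSEQ_le) (use m(2) less_imp_le in blast)
  have "norm (x - m0) \<le> norm (x - y)" if "y \<in> M" for y
    using dle[OF that] m0 by (metis add_0_right norm_ge_zero order_trans power2_le_imp_le)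
  then show ?thesis using closed_sequentially[OF M(2) m(1) lim] by blast
qed

lemma nearest_point_orthogonal:
  assumes M: "csubspace M" and m: "m \<in> M" "\<forall>y\<in>M. norm (x - m) \<le> norm (x - y)"
    and z: "z \<in> M"
  shows "cinner (x - m) z = 0"
proof -
  define u where "u = x - m"
  define w where "w = cinner u z"
  define t :: real where "t = 1 / ((norm z)\<^sup>2 + 1)"
  have t: "t > 0" "t * (norm z)\<^sup>2 < 1"
    unfolding t_def by (auto simp: field_simps add_pos_nonneg)
  define c where "c = complex_of_real t * w"
  have uz: "cinner u (scaleC c z) = complex_of_real (t * (cmod w)\<^sup>2)"
    by (simp add: cinner_scaleC_right c_def w_def complex_norm_square[symmetric] mult.commute)
  \<comment> \<open>compare with the competitor m + t w z, for t small\<close>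
  have "m + scaleC c z \<in> M" using M m z unfolding csubspace_def by auto
  then have "(norm u)\<^sup>2 \<le> (norm (u - scaleC c z))\<^sup>2"
    using m(2) unfolding u_def by (simp add: diff_diff_eq)
  also have "\<dots> = (norm u)\<^sup>2 + (t * cmod w * norm z)\<^sup>2 - 2 * (t * (cmod w)\<^sup>2)"
    using t uz by (simp add: norm_diff_square_cinner norm_scaleC c_def norm_mult)
  finally have "0 \<le> t * (cmod w)\<^sup>2 * (t * (norm z)\<^sup>2 - 2)"
    by (simp add: algebra_simps power2_eq_square)
  then have "t * (cmod w)\<^sup>2 \<le> 0"
    using t by (simp add: mult_le_0_iff zero_le_mult_iff)
  then show ?thesis using t unfolding w_def u_def by (simp add: mult_le_0_iff)
qed

definition proj :: "'a::chilbert_space set \<Rightarrow> 'a \<Rightarrow> 'a" where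
  "proj M x = (SOME m. m \<in> M \<and> (\<forall>z\<in>M. cinner (x - m) z = 0))"

lemma proj_spec:
  assumes "csubspace M" "closed M"
  shows "proj M x \<in> M \<and> (\<forall>z\<in>M. cinner (x - proj M x) z = 0)"
proof -
  have "\<exists>m. m \<in> M \<and> (\<forall>z\<in>M. cinner (x - m) z = 0)"
    using closed_csubspace_nearest_point[OF assms] nearest_point_orthogonal[OF assms(1)] by blast
  then show ?thesis unfolding proj_def by (rule someI_ex)
qed

lemma proj_in: "csubspace M \<Longrightarrow> closed M \<Longrightarrow> proj M x \<in> M"
  using proj_spec by blast

lemma proj_orthogonal: "csubspace M \<Longrightarrow> closed M \<Longrightarrow> z \<in> M \<Longrightarrow> cinner (x - proj M x) z = 0"
  using proj_spec by blast

lemma proj_unique: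
  assumes M: "csubspace M" "closed M" and m: "m \<in> M" "\<And>z. z \<in> M \<Longrightarrow> cinner (x - m) z = 0"
  shows "proj M x = m"
proof -
  have d: "m - proj M x \<in> M" using csubspace_diff[OF M(1) m(1) proj_in[OF M]] .
  have "m - proj M x = (x - proj M x) - (x - m)" by simp
  then have "cinner (m - proj M x) (m - proj M x)
      = cinner (x - proj M x) (m - proj M x) - cinner (x - m) (m - proj M x)"
    by (metis cinner_diff_left)
  also have "\<dots> = 0" using proj_orthogonal[OF M d] m(2)[OF d] by simp
  finally show ?thesis by (simp add: cinner_self_eq_zero)
qed

lemma proj_fixes: "csubspace M \<Longrightarrow> closed M \<Longrightarrow> m \<in> M \<Longrightarrow> proj M m = m"
  by (rule proj_unique) auto

lemma proj_orthogonal_zero: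
  "csubspace M \<Longrightarrow> closed M \<Longrightarrow> (\<And>z. z \<in> M \<Longrightarrow> cinner n z = 0) \<Longrightarrow> proj M n = 0"
  by (rule proj_unique) (auto simp: csubspace_def)

lemma closed_csubspace_double_orthogonal:
  assumes M: "csubspace M" "closed M"
    and y: "\<And>n. (\<And>z. z \<in> M \<Longrightarrow> cinner n z = 0) \<Longrightarrow> cinner n y = 0"
  shows "y \<in> M"
proof -
  define n where "n = y - proj M y"
  have "cinner n n = cinner n y - cinner n (proj M y)"
    unfolding n_def by (simp add: cinner_diff_right)
  also have "\<dots> = 0"
    using y[OF proj_orthogonal[OF M]] proj_orthogonal[OF M proj_in[OF M]] cinner_commute[of n
        "proj M y"]
    by (simp add: n_def)
  finally have "n = 0" by (simp add: cinner_self_eq_zero)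
  then show ?thesis using proj_in[OF M, of y] unfolding n_def by simp
qed

lemma bounded_op_proj:
  assumes M: "csubspace M" "closed M"
  shows "bounded_op (proj M)"
proof -
  have add: "proj M (x + y) = proj M x + proj M y" for x y
  proof (rule proj_unique[OF M])
    show "proj M x + proj M y \<in> M" using proj_in[OF M] M(1) unfolding csubspace_def by blast
    have "cinner (x + y - (proj M x + proj M y)) z
        = cinner (x - proj M x) z + cinner (y - proj M y) z" for z
      by (simp add: cinner_add_left[symmetric] algebra_simps)
    then show "cinner (x + y - (proj M x + proj M y)) z = 0" if "z \<in> M" for z
      using proj_orthogonal[OF M that] by simp
  qed
  have scale: "proj M (scaleC c x) = scaleC c (proj M x)" for c x
  proof (rule proj_unique[OF M])
    show "scaleC c (proj M x) \<in> M" using proj_in[OF M] M(1) unfolding csubspace_def by blast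
    show "cinner (scaleC c x - scaleC c (proj M x)) z = 0" if "z \<in> M" for z
      using proj_orthogonal[OF M that]
      by (simp add: scaleC_diff_right[symmetric] cinner_scaleC_left)
  qed
  have "norm (proj M x) \<le> norm x * 1" for x
  proof -
    have "cinner (proj M x) (x - proj M x) = 0"
      using proj_orthogonal[OF M proj_in[OF M], of x] cinner_commute[of "proj M x"] by simp
    then have "(norm x)\<^sup>2 = (norm (proj M x))\<^sup>2 + (norm (x - proj M x))\<^sup>2"
      using norm_add_square_cinner[of "proj M x" "x - proj M x"] by simp
    then have "(norm (proj M x))\<^sup>2 \<le> (norm x)\<^sup>2" by simp
    then show ?thesis by (simp add: power_mono_iff)
  qed
  then show ?thesis unfolding bounded_op_def using add scale by blast
qed

section \<open>Riesz representation and adjoints\<close>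

lemma riesz_representation:
  fixes phi :: "'a::chilbert_space \<Rightarrow> complex"
  assumes add: "\<And>x y. phi (x + y) = phi x + phi y"
    and scale: "\<And>c x. phi (scaleC c x) = c * phi x"
    and bound: "\<And>x. cmod (phi x) \<le> norm x * K"
  shows "\<exists>z. \<forall>x. phi x = cinner x z"
proof (cases "\<forall>x. phi x = 0")
  case True then show ?thesis by (intro exI[of _ 0]) simp
next
  case False
  then obtain w where w: "phi w \<noteq> 0" by blast
  have bl: "bounded_linear phi"
    by (rule bounded_linear_intro[of _ K])
      (use add scale bound in \<open>auto simp: scaleR_eq_scaleC scaleR_conv_of_real\<close>)
  define N where "N = {x. phi x = 0}"
  have phi0: "phi 0 = 0" using add[of 0 0] by simp
  have NS: "csubspace N" unfolding N_def csubspace_def using phi0 add scale by auto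
  have NC: "closed N" unfolding N_def
    by (rule closed_Collect_eq) (auto intro: linear_continuous_on bl)
  \<comment> \<open>u spans the orthogonal complement of the kernel N\<close>
  define u where "u = w - proj N w"
  have uN: "cinner u z = 0" if "z \<in> N" for z
    unfolding u_def by (rule proj_orthogonal[OF NS NC that])
  have "phi (proj N w) = 0" using proj_in[OF NS NC, of w] by (simp add: N_def)
  then have phiu: "phi u = phi w" using add[of u "proj N w"] by (simp add: u_def)
  have uu: "cinner u u \<noteq> 0"
  proof
    assume "cinner u u = 0"
    then have "u = 0" by (simp add: cinner_self_eq_zero)
    then show False using phiu phi0 w by simp
  qed
  have "phi x = cinner x (scaleC (cnj (phi u / cinner u u)) u)" for x
  proof -
    define v where "v = x - scaleC (phi x / phi u) u"
    have "phi x = phi (v + scaleC (phi x / phi u) u)" unfolding v_def by simp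
    also have "\<dots> = phi v + (phi x / phi u) * phi u" by (simp add: add scale)
    also have "\<dots> = phi v + phi x" using phiu w by simp
    finally have "v \<in> N" by (simp add: N_def)
    then have "cinner u v = 0" by (rule uN)
    then have "cinner v u = 0" by (subst cinner_commute) simp
    then have xu: "cinner x u = (phi x / phi u) * cinner u u"
      unfolding v_def by (simp add: cinner_diff_left cinner_scaleC_left)
    show ?thesis unfolding cinner_scaleC_right xu using uu phiu w by (simp add: field_simps)
  qed
  then show ?thesis by blast
qed

lemma adjoint_eqI:
  assumes "\<And>x y. cinner (S x) y = cinner x (G y)"
  shows "adjoint S = G"
  unfolding adjoint_def
proof (rule the_equality)
  fix F assume F: "\<forall>x y. cinner (S x) y = cinner x (F y)"
  show "F = G"
  proof
    fix y show "F y = G y"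
      by (rule cinner_ext_right) (use F assms in metis)
  qed
qed (use assms in blast)

lemma cinner_adjoint:
  assumes S: "bounded_op S"
  shows "cinner (S x) y = cinner x (adjoint S y)"
proof -
  obtain K where K: "\<forall>x. norm (S x) \<le> norm x * K" using bounded_op_bound[OF S] by blast
  have "\<exists>z. \<forall>x. cinner (S x) y = cinner x z" for y
  proof (rule riesz_representation[where K="K * norm y"])
    show "cmod (cinner (S a) y) \<le> norm a * (K * norm y)" for a
      using cinner_cauchy_schwarz[of "S a" y] mult_right_mono[OF spec[OF K, of a], of "norm y"]
      by (simp add: mult.assoc)
  qed (simp_all add: S bounded_op_add bounded_op_scaleC cinner_add_left cinner_scaleC_left)
  then obtain F where "\<And>x y. cinner (S x) y = cinner x (F y)" by metis
  then show ?thesis using adjoint_eqI by metis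
qed

section \<open>Positive operators\<close>

lemma positive_op_bounded: "positive_op A \<Longrightarrow> bounded_op A"
  unfolding positive_op_def by blast

lemma positive_op_nonneg: "positive_op A \<Longrightarrow> 0 \<le> Re (cinner (A x) x)"
  unfolding positive_op_def by blast

lemma positive_op_real: "positive_op A \<Longrightarrow> Im (cinner (A x) x) = 0"
  unfolding positive_op_def by blast

lemma positive_op_self_adjoint:
  assumes A: "positive_op A"
  shows "cinner (A x) y = cinner x (A y)"
proof -
  have B: "bounded_op A" and real: "\<And>x. Im (cinner (A x) x) = 0"
    using A unfolding positive_op_def by auto
  define a where "a = cinner (A x) y"
  define b where "b = cinner (A y) x"
  \<comment> \<open>polarization: test reality of the quadratic form at x + y and at x + i y\<close>
  have "Im (a + b) = 0"
    using real[of "x + y"] real[of x] real[of y] B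
    by (simp add: bounded_op_add cinner_add_left cinner_add_right a_def b_def)
  moreover have "Re b - Re a = 0"
    using real[of "x + scaleC \<i> y"] real[of x] real[of y] B
    by (simp add: bounded_op_add bounded_op_scaleC cinner_add_left cinner_add_right
        cinner_scaleC_left cinner_scaleC_right a_def b_def)
  ultimately have "a = cnj b" by (simp add: complex_eq_iff)
  then show ?thesis unfolding a_def b_def by (subst (2) cinner_commute) simp
qed

lemma self_adjoint_cinner_real:
  assumes "\<And>x y. cinner (S x) y = cinner x (S y)"
  shows "Im (cinner (S x) x) = 0"
  using assms[of x x] cinner_commute[of x "S x"] by (simp add: complex_eq_iff)

lemma funpow_self_adjoint:
  assumes "\<And>x y. cinner (S x) y = cinner x (S y)"
  shows "cinner ((S ^^ k) x) y = cinner x ((S ^^ k) y)"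
  by (induction k arbitrary: x y) (simp_all add: assms flip: funpow_swap1)

lemma quadratic_nonneg_imp_le:
  fixes a b c :: real
  assumes b: "0 \<le> b" and q: "\<And>t. 0 \<le> a - 2 * t * c + t\<^sup>2 * c * b"
  shows "c \<le> a * b"
proof -
  consider "b = 0" | "b > 0" using b by fastforce
  then show ?thesis
  proof cases
    case 1
    show ?thesis
    proof (rule ccontr)
      assume "\<not> c \<le> a * b"
      then have c: "c > 0" using 1 by simp
      have "0 \<le> a - 2 * ((a + 1) / (2 * c)) * c" using q[of "(a + 1) / (2 * c)"] 1 by simp
      also have "\<dots> = -1" using c by (simp add: field_simps)
      finally show False by simp
    qed
  next
    case 2
    have "0 \<le> a - 2 * (1/b) * c + (1/b)\<^sup>2 * c * b" by (rule q)
    also have "\<dots> = (a * b - c) / b" using 2 by (simp add: field_simps power2_eq_square)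
    finally show ?thesis using 2 by (simp add: zero_le_divide_iff)
  qed
qed

lemma positive_op_cauchy_schwarz:
  assumes A: "positive_op A"
  shows "(cmod (cinner (A x) y))\<^sup>2 \<le> Re (cinner (A x) x) * Re (cinner (A y) y)"
proof -
  have B: "bounded_op A" using A by (rule positive_op_bounded)
  define w where "w = cinner (A x) y"
  define a where "a = Re (cinner (A x) x)"
  define b where "b = Re (cinner (A y) y)"
  have yx: "cinner (A y) x = cnj w"
    unfolding w_def using positive_op_self_adjoint[OF A, of y x] by (subst cinner_commute) simp
  have q: "0 \<le> a - 2 * t * (cmod w)\<^sup>2 + t\<^sup>2 * (cmod w)\<^sup>2 * b" for t :: real
  proof -
    define c where "c = complex_of_real t * w"
    have "0 \<le> Re (cinner (A (x - scaleC c y)) (x - scaleC c y))"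
      by (rule positive_op_nonneg[OF A])
    also have "cinner (A (x - scaleC c y)) (x - scaleC c y) =
        cinner (A x) x - cnj c * w - c * cnj w + c * cnj c * cinner (A y) y"
      using B yx by (simp add: bounded_op_diff bounded_op_scaleC cinner_diff_left cinner_diff_right
          cinner_scaleC_left cinner_scaleC_right w_def algebra_simps)
    also have "Re \<dots> = a - 2 * t * (cmod w)\<^sup>2 + t\<^sup>2 * (cmod w)\<^sup>2 * b"
      unfolding c_def a_def b_def cmod_power2 by (simp add: power2_eq_square algebra_simps)
    finally show ?thesis .
  qed
  have "(cmod w)\<^sup>2 \<le> a * b"
    by (rule quadratic_nonneg_imp_le[OF _ q]) (simp add: b_def positive_op_nonneg[OF A])
  then show ?thesis unfolding w_def a_def b_def .
qed

lemma positive_op_norm_square_le: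
  assumes A: "positive_op A" and K: "\<And>x. norm (A x) \<le> norm x * K"
  shows "(norm (A x))\<^sup>2 \<le> K * Re (cinner (A x) x)"
proof (cases "A x = 0")
  case True
  then show ?thesis using K[of 0] bounded_op_zero[OF positive_op_bounded[OF A]] by simp
next
  case False
  define n where "n = (norm (A x))\<^sup>2"
  have "Re (cinner (A (A x)) (A x)) \<le> norm (A (A x)) * norm (A x)"
    using cinner_cauchy_schwarz[of "A (A x)" "A x"] complex_Re_le_cmod order_trans by blast
  also have "\<dots> \<le> norm (A x) * K * norm (A x)" using K by (simp add: mult_right_mono)
  finally have AAx: "Re (cinner (A (A x)) (A x)) \<le> K * n"
    by (simp add: n_def power2_eq_square mult_ac)
  have "cmod (cinner (A x) (A x)) = n" by (simp add: n_def cinner_self del: of_real_power)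
  then have "n * n \<le> Re (cinner (A x) x) * Re (cinner (A (A x)) (A x))"
    using positive_op_cauchy_schwarz[OF A, of x "A x"] by (simp add: power2_eq_square)
  also have "\<dots> \<le> Re (cinner (A x) x) * (K * n)"
    by (rule mult_left_mono[OF AAx positive_op_nonneg[OF A]])
  finally have "n * n \<le> (K * Re (cinner (A x) x)) * n" by (simp add: mult_ac)
  moreover have "n > 0" using False by (simp add: n_def)
  ultimately show ?thesis unfolding n_def[symmetric] by (rule mult_right_le_imp_le)
qed

section \<open>Bounded preimages for operators with closed range\<close>

lemma closure_image_cball_contains_ball:
  fixes f :: "'a::real_normed_vector \<Rightarrow> 'b::banach"
  assumes "closed (range f)"
  shows "\<exists>n::nat. \<exists>y0\<in>range f. \<exists>e>0.
    \<forall>y\<in>range f. dist y y0 < e \<longrightarrow> y \<in> closure (f ` cball 0 (real n))"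
proof -
  define F where "F = (\<lambda>n::nat. range f \<inter> closure (f ` cball 0 (real n)))"
  define X where "X = top_of_set (range f)"
  have complete: "completely_metrizable_space X"
  proof -
    have "closedin euclidean (range f)" using assms closed_closedin by blast
    from completely_metrizable_space_closedin[OF completely_metrizable_space_euclidean this]
    show ?thesis unfolding X_def .
  qed
  have closed: "closedin X (F n)" for n unfolding X_def F_def by (rule closedin_closed_Int) simp
  have cover: "\<Union> (range F) = range f"
  proof
    show "\<Union> (range F) \<subseteq> range f" unfolding F_def by auto
    show "range f \<subseteq> \<Union> (range F)"
    proof
      fix y assume "y \<in> range f"
      then obtain x where x: "y = f x" by blast
      obtain n :: nat where "norm x \<le> real n" using real_arch_simple[of "norm x"] by (elim exE)
      then have "y \<in> f ` cball 0 (real n)" using x by auto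
      then have "y \<in> closure (f ` cball 0 (real n))" by (rule subsetD[OF closure_subset])
      then have "y \<in> F n" unfolding F_def using \<open>y \<in> range f\<close> by simp
      then show "y \<in> \<Union> (range F)" by (rule UN_I[rotated]) simp
    qed
  qed
  \<comment> \<open>Baire: the closed sets F n cover the complete space range f, so one of them has interior\<close>
  have "\<exists>n. X interior_of (F n) \<noteq> {}"
  proof (rule ccontr)
    assume "\<not> ?thesis"
    then have "\<And>T. T \<in> range F \<Longrightarrow> closedin X T \<and> X interior_of T = {}" using closed by auto
    then have "X interior_of \<Union> (range F) = {}"
      by (intro Baire_category_alt) (use complete in auto)
    moreover have "X interior_of \<Union> (range F) = range f"
      unfolding cover X_def using interior_of_topspace[of "top_of_set (range f)"] by simp
    ultimately show False by auto
  qed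
  then obtain n y0 where "y0 \<in> X interior_of (F n)" by blast
  then obtain T where T: "openin X T" "y0 \<in> T" "T \<subseteq> F n" unfolding interior_of_def by blast
  have T': "T \<subseteq> range f \<and> (\<forall>x\<in>T. \<exists>e>0. \<forall>x'\<in>range f. dist x' x < e \<longrightarrow> x' \<in> T)"
    using T(1) unfolding X_def openin_euclidean_subtopology_iff .
  then obtain e where "e > 0" "\<forall>y\<in>range f. dist y y0 < e \<longrightarrow> y \<in> T"
    using T(2) by blast
  moreover have "y0 \<in> range f" using T' T(2) by blast
  ultimately show ?thesis using T(3) unfolding F_def by blast
qed

lemma closure_image_cball_diff:
  assumes f: "bounded_linear f"
    and a: "a \<in> closure (f ` cball 0 r)" and b: "b \<in> closure (f ` cball 0 r)"
  shows "a - b \<in> closure (f ` cball 0 (2 * r))"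
proof -
  from a obtain u where u: "\<And>n. u n \<in> f ` cball 0 r" "u \<longlonglongrightarrow> a"
    unfolding closure_sequential by blast
  from b obtain v where v: "\<And>n. v n \<in> f ` cball 0 r" "v \<longlonglongrightarrow> b"
    unfolding closure_sequential by blast
  have "u n - v n \<in> f ` cball 0 (2 * r)" for n
  proof -
    obtain x x' where x: "u n = f x" "norm x \<le> r" and x': "v n = f x'" "norm x' \<le> r"
      using u(1)[of n] v(1)[of n] by auto
    have "norm (x - x') \<le> 2 * r" using norm_triangle_ineq4[of x x'] x x' by simp
    then have "x - x' \<in> cball 0 (2 * r)" by simp
    moreover have "u n - v n = f (x - x')" using x x'
      by (simp add: linear_diff bounded_linear.linear[OF f])
    ultimately show ?thesis by (rule rev_image_eqI)
  qed
  moreover have "(\<lambda>n. u n - v n) \<longlonglongrightarrow> a - b" by (intro tendsto_intros u v)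
  ultimately show ?thesis unfolding closure_sequential by (intro exI[of _ "\<lambda>n. u n - v n"]) simp
qed

lemma closed_range_approximate_preimage:
  fixes f :: "'a::real_normed_vector \<Rightarrow> 'b::banach"
  assumes f: "bounded_linear f" and closed: "closed (range f)"
  shows "\<exists>L>0. \<forall>z\<in>range f. \<exists>x. norm x \<le> L * norm z \<and> norm (z - f x) \<le> norm z / 2"
proof -
  note lin = bounded_linear.linear[OF f]
  obtain n y0 e where y0: "y0 \<in> range f" and e: "e > 0"
    and ball: "\<forall>y\<in>range f. dist y y0 < e \<longrightarrow> y \<in> closure (f ` cball 0 (real n))"
    using closure_image_cball_contains_ball[OF closed] by blast
  define N where "N = 2 * real n"
  have small: "z \<in> closure (f ` cball 0 N)" if z: "z \<in> range f" "norm z < e" for z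
  proof -
    have "y0 + z \<in> range f" using y0 z by (auto simp: linear_add[OF lin, symmetric])
    moreover have "dist (y0 + z) y0 < e" using z by (simp add: dist_norm)
    ultimately have "y0 + z \<in> closure (f ` cball 0 (real n))" using ball by blast
    moreover have "y0 \<in> closure (f ` cball 0 (real n))" using ball[rule_format, OF y0] e by simp
    ultimately show ?thesis using closure_image_cball_diff[OF f] unfolding N_def by fastforce
  qed
  define L where "L = 2 * N / e + 1"
  have "\<exists>x. norm x \<le> L * norm z \<and> norm (z - f x) \<le> norm z / 2" if z: "z \<in> range f" for z
  proof (cases "z = 0")
    case True
    then show ?thesis by (intro exI[of _ 0]) (simp add: linear_0[OF lin])
  next
    case False
    define s where "s = e / (2 * norm z)"
    have s: "s > 0" "norm (s *\<^sub>R z) = e / 2" unfolding s_def using e False by auto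
    have "s *\<^sub>R z \<in> range f" using z by (auto simp: linear_scale[OF lin, symmetric])
    then have "s *\<^sub>R z \<in> closure (f ` cball 0 N)" using small s e by simp
    moreover have "s * (norm z / 2) > 0" using s False by simp
    ultimately obtain x' where x': "norm x' \<le> N" "dist (f x') (s *\<^sub>R z) < s * (norm z / 2)"
      unfolding closure_approachable by (metis (no_types, lifting) image_iff mem_cball_0)
    have "z - f ((1/s) *\<^sub>R x') = (1/s) *\<^sub>R (s *\<^sub>R z - f x')"
      using s by (simp add: linear_scale[OF lin] scaleR_diff_right)
    then have "norm (z - f ((1/s) *\<^sub>R x')) = (1/s) * norm (s *\<^sub>R z - f x')"
      using s by simp
    also have "\<dots> \<le> norm z / 2"
      using x'(2) s by (simp add: dist_norm norm_minus_commute field_simps)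
    finally have "norm (z - f ((1/s) *\<^sub>R x')) \<le> norm z / 2" .
    moreover have "norm ((1/s) *\<^sub>R x') \<le> L * norm z"
    proof -
      have "norm ((1/s) *\<^sub>R x') \<le> (1/s) * N" using x'(1) s by (simp add: divide_right_mono)
      also have "\<dots> = (2 * N / e) * norm z" unfolding s_def using e False by (simp add: field_simps)
      also have "\<dots> \<le> L * norm z" unfolding L_def by (simp add: distrib_right)
      finally show ?thesis .
    qed
    ultimately show ?thesis by blast
  qed
  moreover have "L > 0" unfolding L_def N_def using e by (simp add: add_nonneg_pos)
  ultimately show ?thesis by blast
qed

lemma halving_residuals:
  assumes lin: "linear f"
    and g: "\<And>z. z \<in> range f \<Longrightarrow> norm (z - f (g z)) \<le> norm z / 2"
    and y: "y \<in> range f"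
  defines "r \<equiv> rec_nat y (\<lambda>_ rk. rk - f (g rk))"
  shows "r k \<in> range f" and "norm (r k) \<le> norm y / 2 ^ k" and "(\<Sum>i<k. f (g (r i))) = y - r k"
proof -
  have r0: "r 0 = y" and rS: "r (Suc k) = r k - f (g (r k))" for k
    unfolding r_def by simp_all
  show range: "r k \<in> range f" for k
  proof (induction k)
    case (Suc k)
    then obtain x where "r k = f x" by blast
    then show ?case unfolding rS by (metis linear_diff[OF lin] rangeI)
  qed (use y r0 in simp)
  show "norm (r k) \<le> norm y / 2 ^ k"
  proof (induction k)
    case (Suc k)
    have "norm (r (Suc k)) \<le> norm (r k) / 2" unfolding rS using g[OF range[of k]] .
    then show ?case using Suc by simp
  qed (simp add: r0)
  show "(\<Sum>i<k. f (g (r i))) = y - r k"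
    by (induction k) (simp_all add: r0 rS)
qed

lemma closed_range_bounded_preimage:
  fixes f :: "'a::banach \<Rightarrow> 'b::banach"
  assumes f: "bounded_linear f" and closed: "closed (range f)"
  shows "\<exists>L>0. \<forall>y\<in>range f. \<exists>x. f x = y \<and> norm x \<le> L * norm y"
proof -
  obtain L where L: "L > 0"
    and "\<forall>z\<in>range f. \<exists>x. norm x \<le> L * norm z \<and> norm (z - f x) \<le> norm z / 2"
    using closed_range_approximate_preimage[OF f closed] by blast
  then obtain g where g: "\<And>z. z \<in> range f \<Longrightarrow> norm (g z) \<le> L * norm z"
    "\<And>z. z \<in> range f \<Longrightarrow> norm (z - f (g z)) \<le> norm z / 2"
    by metis
  \<comment> \<open>correct the residual y - f (x 0 + ... + x (k-1)) step by step, halving it each time\<close>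
  have "\<exists>x. f x = y \<and> norm x \<le> (2 * L) * norm y" if y: "y \<in> range f" for y
  proof -
    define r where "r = rec_nat y (\<lambda>_ rk. rk - f (g rk))"
    note r = halving_residuals[OF bounded_linear.linear[OF f] g(2) y, folded r_def]
    define x where "x k = g (r k)" for k
    have x: "norm (x k) \<le> L * norm y * (1/2) ^ k" for k
      using g(1)[OF r(1)[of k]] mult_left_mono[OF r(2)[of k] less_imp_le[OF L]]
      unfolding x_def by (simp add: power_divide)
    have geometric: "summable (\<lambda>k. L * norm y * (1/2::real) ^ k)"
      by (intro summable_mult summable_geometric) simp
    have norm_x: "summable (\<lambda>k. norm (x k))"
      by (rule summable_comparison_test'[OF geometric]) (use x in simp)
    have "r \<longlonglongrightarrow> 0"
    proof (rule Lim_null_comparison)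
      show "\<forall>\<^sub>F k in sequentially. norm (r k) \<le> norm y * (1/2) ^ k"
        using r(2) by (simp add: power_divide)
      show "(\<lambda>k. norm y * (1/2::real) ^ k) \<longlonglongrightarrow> 0"
        using tendsto_mult_right_zero[OF LIMSEQ_power_zero[of "1/2::real"]] by simp
    qed
    then have "(\<lambda>n. y - r n) \<longlonglongrightarrow> y - 0" by (intro tendsto_intros)
    then have "(\<lambda>k. f (x k)) sums y" unfolding sums_def x_def by (simp only: r(3) diff_zero)
    then have "f (suminf x) = y"
      using bounded_linear.sums[OF f summable_sums[OF summable_norm_cancel[OF norm_x]]] sums_unique2
      by blast
    moreover have "norm (suminf x) \<le> (\<Sum>k. L * norm y * (1/2::real) ^ k)"
      using summable_norm[OF norm_x] suminf_le[OF x norm_x geometric] by linarith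
    moreover have "(\<Sum>k. L * norm y * (1/2::real) ^ k) = 2 * L * norm y"
      using suminf_mult[OF summable_geometric[of "1/2::real"], of "L * norm y"]
          suminf_geometric[of "1/2::real"]
      by simp
    ultimately show ?thesis by auto
  qed
  then show ?thesis using L by (intro exI[of _ "2 * L"]) auto
qed

section \<open>Square roots of positive operators\<close>

lemma suminf_eq_infsum_nat: "f summable_on (UNIV :: nat set) \<Longrightarrow> suminf f = infsum f UNIV"
  by (metis has_sum_imp_sums has_sum_infsum sums_unique)

lemma norm_scaleR_product_le:
  fixes a b :: "nat \<Rightarrow> real" and v :: "nat \<Rightarrow> 'b::real_normed_vector"
  assumes "\<And>n. norm (v n) \<le> M"
  shows "norm ((a k * b j) *\<^sub>R v (k + j)) \<le> \<bar>a k\<bar> * M * \<bar>b j\<bar>"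
proof -
  have "\<bar>a k\<bar> * \<bar>b j\<bar> * norm (v (k + j)) \<le> \<bar>a k\<bar> * \<bar>b j\<bar> * M"
    by (rule mult_left_mono[OF assms]) simp
  then show ?thesis by (simp add: abs_mult mult_ac)
qed

lemma summable_on_scaleR_product_family:
  fixes a b :: "nat \<Rightarrow> real" and v :: "nat \<Rightarrow> 'b::banach"
  assumes a: "summable (\<lambda>k. \<bar>a k\<bar>)" and b: "summable (\<lambda>k. \<bar>b k\<bar>)" and v: "\<And>n. norm (v n) \<le> M"
  shows "(\<lambda>(k, j). (a k * b j) *\<^sub>R v (k + j)) summable_on UNIV"
proof -
  have M: "M \<ge> 0" using v[of 0] norm_ge_zero order_trans by blast
  define g where "g = (\<lambda>(k::nat, j::nat). \<bar>a k\<bar> * M * \<bar>b j\<bar>)"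
  have "((\<lambda>j. g (k, j)) has_sum (\<bar>a k\<bar> * M * suminf (\<lambda>j. \<bar>b j\<bar>))) UNIV" for k
    using sums_mult[OF summable_sums[OF b], of "\<bar>a k\<bar> * M"]
    by (intro sums_nonneg_imp_has_sum) (auto simp: g_def M)
  moreover have "(\<lambda>k. \<bar>a k\<bar> * M * suminf (\<lambda>j. \<bar>b j\<bar>)) summable_on UNIV"
    using summable_mult2[OF a, of "M * suminf (\<lambda>j. \<bar>b j\<bar>)"]
    by (intro norm_summable_imp_summable_on)
      (simp add: abs_mult M suminf_nonneg[OF b] mult.assoc)
  ultimately have "g summable_on Sigma UNIV (\<lambda>_. UNIV)"
    by (rule summable_on_SigmaI) (auto simp: g_def M)
  then have "g summable_on UNIV" by simp
  then have "(\<lambda>x. norm ((\<lambda>(k, j). (a k * b j) *\<^sub>R v (k + j)) x)) summable_on UNIV"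
    by (rule Infinite_Sum.abs_summable_on_comparison_test')
      (use norm_scaleR_product_le[OF v] in \<open>auto simp: g_def\<close>)
  then show ?thesis by (rule abs_summable_summable)
qed

lemma suminf_scaleR_Cauchy_product:
  fixes a b :: "nat \<Rightarrow> real" and v :: "nat \<Rightarrow> 'b::banach"
  assumes a: "summable (\<lambda>k. \<bar>a k\<bar>)" and b: "summable (\<lambda>k. \<bar>b k\<bar>)" and v: "\<And>n. norm (v n) \<le> M"
  shows "(\<Sum>k. \<Sum>j. (a k * b j) *\<^sub>R v (k + j)) = (\<Sum>n. (\<Sum>k\<le>n. a k * b (n - k)) *\<^sub>R v n)"
proof -
  define f where "f = (\<lambda>(k, j). (a k * b j) *\<^sub>R v (k + j))"
  have f: "f summable_on Sigma UNIV (\<lambda>_. UNIV)"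
    using summable_on_scaleR_product_family[OF a b v] by (simp add: f_def)
  have rows: "(\<lambda>j. f (k, j)) summable_on UNIV" for k
  proof (rule norm_summable_imp_summable_on)
    show "summable (\<lambda>j. norm (f (k, j)))"
      by (rule summable_comparison_test'[OF summable_mult[OF b, of "\<bar>a k\<bar> * M"]])
        (use norm_scaleR_product_le[OF v] in \<open>simp add: f_def\<close>)
  qed
  \<comment> \<open>the same family, indexed by the antidiagonals k + j = n\<close>
  have diag: "(\<lambda>(n, k). f (k, n - k)) summable_on Sigma UNIV (\<lambda>n. {..n})"
    using f summable_on_reindex_bij_witness[of UNIV "\<lambda>(n, k). (k, n - k)" "\<lambda>(k, j). (k + j, k)"
        "Sigma UNIV (\<lambda>n. {..n})" "\<lambda>(n, k). f (k, n - k)" f] by auto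
  have antidiagonal: "infsum (\<lambda>k. f (k, n - k)) {..n} = (\<Sum>k\<le>n. a k * b (n - k)) *\<^sub>R v n" for n
    by (simp add: f_def scaleR_sum_left)
  have "(\<Sum>k. \<Sum>j. (a k * b j) *\<^sub>R v (k + j)) = (\<Sum>k. infsum (\<lambda>j. f (k, j)) UNIV)"
    using suminf_eq_infsum_nat[OF rows] by (simp add: f_def)
  also have "\<dots> = infsum (\<lambda>k. infsum (\<lambda>j. f (k, j)) UNIV) UNIV"
    by (rule suminf_eq_infsum_nat[OF summable_on_SigmaD[OF f rows]])
  also have "\<dots> = infsum f UNIV"
    using infsum_Sigma_banach[OF f] by simp
  also have "\<dots> = infsum (\<lambda>(n, k). f (k, n - k)) (Sigma UNIV (\<lambda>n. {..n}))"
    by (rule infsum_reindex_bij_witness[of _ "\<lambda>(k, j). (k + j, k)" "\<lambda>(n, k). (k, n - k)",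
        symmetric])
      auto
  also have "\<dots> = infsum (\<lambda>n. (\<Sum>k\<le>n. a k * b (n - k)) *\<^sub>R v n) UNIV"
    using infsum_Sigma_banach[OF diag] antidiagonal by simp
  also have "\<dots> = (\<Sum>n. (\<Sum>k\<le>n. a k * b (n - k)) *\<^sub>R v n)"
    using summable_on_SigmaD[OF diag] antidiagonal by (simp add: suminf_eq_infsum_nat)
  finally show ?thesis .
qed

(* the Taylor coefficients of sqrt (1 - t) at 0 *)
definition sqrt_coeff :: "nat \<Rightarrow> real" where
  "sqrt_coeff k = ((1/2) gchoose k) * (-1)^k"

lemma sqrt_coeff_0 [simp]: "sqrt_coeff 0 = 1"
  by (simp add: sqrt_coeff_def)

lemma sqrt_coeff_nonpos: "k > 0 \<Longrightarrow> sqrt_coeff k \<le> 0"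
proof -
  assume "k > 0"
  then obtain n where k: "k = Suc n" using gr0_implies_Suc by blast
  have "sqrt_coeff k = pochhammer (-1/2) k / fact k"
    by (simp add: sqrt_coeff_def gbinomial_pochhammer power_mult_distrib[symmetric])
  also have "pochhammer (-1/2::real) k = (-1/2) * pochhammer (1/2) n"
    unfolding k pochhammer_rec by simp
  finally show ?thesis using pochhammer_pos[of "1/2::real" n] by (simp add: divide_nonpos_pos)
qed

(* the coefficients of sqrt (1 - t) ^ 2 = 1 - t, via Vandermonde's identity *)
lemma sqrt_coeff_convolution:
  "(\<Sum>k\<le>n. sqrt_coeff k * sqrt_coeff (n - k)) = (if n = 0 then 1 else if n = 1 then -1 else 0)"
proof -
  have "(\<Sum>k\<le>n. sqrt_coeff k * sqrt_coeff (n - k))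
      = (-1)^n * (\<Sum>k\<le>n. ((1/2::real) gchoose k) * ((1/2) gchoose (n - k)))"
    unfolding sum_distrib_left
  proof (rule sum.cong[OF refl])
    fix k assume "k \<in> {..n}"
    then have "(-1::real)^k * (-1)^(n - k) = (-1)^n" by (simp add: power_add[symmetric])
    then show "sqrt_coeff k * sqrt_coeff (n - k)
        = (-1)^n * (((1/2::real) gchoose k) * ((1/2) gchoose (n - k)))"
    proof -
      have "sqrt_coeff k * sqrt_coeff (n - k)
          = (((1/2::real) gchoose k) * ((1/2) gchoose (n - k))) * ((-1)^k * (-1)^(n - k))"
        unfolding sqrt_coeff_def by (simp only: mult_ac)
      then show ?thesis using \<open>(-1::real)^k * (-1)^(n - k) = (-1)^n\<close> by (simp only: mult_ac)
    qed
  qed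
  also have "(\<Sum>k\<le>n. ((1/2::real) gchoose k) * ((1/2) gchoose (n - k))) = 1 gchoose n"
    using gbinomial_Vandermonde[of "1/2::real" "1/2" n] by (simp add: atLeast0AtMost)
  also have "(1::real) gchoose n = (if n \<le> 1 then 1 else 0)"
    using binomial_gbinomial[of 1 n, where 'a=real] by (cases n) (auto simp: binomial_eq_0)
  finally show ?thesis by (cases "n = 0"; cases "n = 1") simp_all
qed

lemma sqrt_coeff_partial_sum_nonneg: "0 \<le> (\<Sum>k<N. sqrt_coeff k)"
proof (cases "N = 0")
  case False
  \<comment> \<open>sqrt (1 - t) is the sum of a series whose terms beyond the first N are nonpositive\<close>
  have le: "0 \<le> (\<Sum>k<N. sqrt_coeff k * t^k)" if t: "0 < t" "t < 1" for t :: real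
  proof -
    have "(\<lambda>k. ((1/2::real) gchoose k) * (-t)^k) sums sqrt (1 + - t)"
      by (rule sqrt_series) (use t in simp)
    then have "(\<lambda>k. - (sqrt_coeff k * t^k)) sums (- sqrt (1 - t))"
      using sums_minus by (simp add: sqrt_coeff_def power_minus[of t] mult_ac)
    moreover have "0 \<le> - (sqrt_coeff k * t^k)" if "k \<notin> {..<N}" for k
      using sqrt_coeff_nonpos[of k] that t False by (simp add: mult_nonpos_nonneg)
    ultimately have "(\<Sum>k<N. - (sqrt_coeff k * t^k)) \<le> - sqrt (1 - t)"
      using sum_le_suminf[of "\<lambda>k. - (sqrt_coeff k * t^k)" "{..<N}"] by (simp add: sums_iff)
    then have "sqrt (1 - t) \<le> (\<Sum>k<N. sqrt_coeff k * t^k)" by (simp add: sum_negf)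
    then show ?thesis using real_sqrt_ge_zero[of "1 - t"] t by linarith
  qed
  have "((\<lambda>t. \<Sum>k<N. sqrt_coeff k * t^k) \<longlongrightarrow> (\<Sum>k<N. sqrt_coeff k * 1^k)) (at_left (1::real))"
    by (intro tendsto_intros)
  moreover have "eventually (\<lambda>t. 0 \<le> (\<Sum>k<N. sqrt_coeff k * t^k)) (at_left (1::real))"
    using eventually_at_left_real[of 0 "1::real"] by (rule eventually_mono) (use le in auto)
  ultimately have "0 \<le> (\<Sum>k<N. sqrt_coeff k * 1^k)"
    by (rule tendsto_lowerbound) simp
  then show ?thesis by simp
qed simp

lemma summable_abs_sqrt_coeff: "summable (\<lambda>k. \<bar>sqrt_coeff k\<bar>)"
proof (rule summableI_nonneg_bounded)
  fix N
  have "\<bar>sqrt_coeff k\<bar> = (if k = 0 then 2 else 0) - sqrt_coeff k" for k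
    using sqrt_coeff_nonpos[of k] by auto
  then have "(\<Sum>k<N. \<bar>sqrt_coeff k\<bar>) = (\<Sum>k<N. if k = 0 then 2 else 0) - (\<Sum>k<N. sqrt_coeff k)"
    by (simp add: sum_subtractf)
  also have "\<dots> \<le> 2" using sqrt_coeff_partial_sum_nonneg[of N] by (simp add: sum.delta)
  finally show "(\<Sum>k<N. \<bar>sqrt_coeff k\<bar>) \<le> 2" .
qed simp

lemma summable_sqrt_coeff: "summable sqrt_coeff"
  using summable_abs_sqrt_coeff by (rule summable_rabs_cancel)

lemma suminf_sqrt_coeff_nonneg: "0 \<le> suminf sqrt_coeff"
  using LIMSEQ_le_const[OF summable_LIMSEQ[OF summable_sqrt_coeff], of 0]
    sqrt_coeff_partial_sum_nonneg by blast

text \<open>For K \<ge> norm A the operator C = I - A/K satisfies 0 \<le> C \<le> I, and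
  sqrt (A/K) = sqrt (I - C) is the sum of the binomial series in C.\<close>

context
  fixes A :: "'a::chilbert_space \<Rightarrow> 'a" and K :: real
  assumes A: "positive_op A" and K: "K > 0" and A_le: "\<And>x. norm (A x) \<le> norm x * K"
begin

definition id_minus_scaled :: "'a \<Rightarrow> 'a" where
  "id_minus_scaled x = x - scaleC (complex_of_real (1/K)) (A x)"

lemma bounded_op_id_minus_scaled: "bounded_op id_minus_scaled"
  using bounded_op_diff_fun[OF bounded_op_ident bounded_op_compose[OF bounded_op_scaleC_const
        positive_op_bounded[OF A]]]
  by (simp add: id_minus_scaled_def[abs_def])

lemma id_minus_scaled_self_adjoint: "cinner (id_minus_scaled x) y = cinner x (id_minus_scaled y)"
  by (simp add: id_minus_scaled_def cinner_diff_left cinner_diff_right cinner_scaleC_left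
      cinner_scaleC_right positive_op_self_adjoint[OF A])

lemma norm_id_minus_scaled_le: "norm (id_minus_scaled x) \<le> norm x"
proof -
  define r where "r = Re (cinner (A x) x)"
  have r: "r \<ge> 0" unfolding r_def by (rule positive_op_nonneg[OF A])
  have xAx: "cinner x (A x) = complex_of_real r"
    using positive_op_self_adjoint[OF A, of x x] positive_op_real[OF A, of x] unfolding r_def
    by (simp add: complex_eq_iff)
  have "(norm (id_minus_scaled x))\<^sup>2 = (norm x)\<^sup>2 + (1/K)\<^sup>2 * (norm (A x))\<^sup>2 - 2 * (1/K) * r"
    using K by (simp add: id_minus_scaled_def norm_diff_square_cinner norm_scaleC
        cinner_scaleC_right
        xAx power_mult_distrib norm_divide power_divide)
  also have "(1/K)\<^sup>2 * (norm (A x))\<^sup>2 \<le> (1/K)\<^sup>2 * (K * r)"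
    unfolding r_def by (rule mult_left_mono[OF positive_op_norm_square_le[OF A A_le]]) simp
  also have "(1/K)\<^sup>2 * (K * r) = (1/K) * r" using K by (simp add: power2_eq_square)
  finally have "(norm (id_minus_scaled x))\<^sup>2 \<le> (norm x)\<^sup>2 - (1/K) * r" by simp
  also have "\<dots> \<le> (norm x)\<^sup>2" using r K by simp
  finally have "(norm (id_minus_scaled x))\<^sup>2 \<le> (norm x)\<^sup>2" .
  then show ?thesis by (rule power2_le_imp_le) simp
qed

lemma id_minus_scaled_commute:
  "bounded_op B \<Longrightarrow> (\<And>x. B (A x) = A (B x)) \<Longrightarrow> B (id_minus_scaled x) = id_minus_scaled (B x)"
  unfolding id_minus_scaled_def by (simp add: bounded_op_diff bounded_op_scaleC)

definition sqrt_series :: "'a \<Rightarrow> 'a" where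
  "sqrt_series x = (\<Sum>k. sqrt_coeff k *\<^sub>R (id_minus_scaled ^^ k) x)"

lemma norm_sqrt_series_term_le:
  "norm (sqrt_coeff k *\<^sub>R (id_minus_scaled ^^ k) x) \<le> \<bar>sqrt_coeff k\<bar> * norm x"
  using mult_left_mono[OF norm_funpow_le[OF norm_id_minus_scaled_le]] by simp

lemma summable_norm_sqrt_series:
  "summable (\<lambda>k. norm (sqrt_coeff k *\<^sub>R (id_minus_scaled ^^ k) x))"
  by (rule summable_comparison_test'[OF summable_mult2[OF summable_abs_sqrt_coeff, of "norm x"]])
    (use norm_sqrt_series_term_le in simp)

lemma summable_sqrt_series: "summable (\<lambda>k. sqrt_coeff k *\<^sub>R (id_minus_scaled ^^ k) x)"
  by (rule summable_norm_cancel[OF summable_norm_sqrt_series])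

lemma bounded_op_sqrt_series: "bounded_op sqrt_series"
proof -
  have C: "bounded_op (id_minus_scaled ^^ k)" for k
    by (rule bounded_op_funpow[OF bounded_op_id_minus_scaled])
  have "sqrt_series (x + y) = sqrt_series x + sqrt_series y" for x y
    unfolding sqrt_series_def
    by (simp add: bounded_op_add[OF C] scaleR_add_right suminf_add[OF summable_sqrt_series
        summable_sqrt_series])
  moreover have "sqrt_series (scaleC c x) = scaleC c (sqrt_series x)" for c x
  proof -
    have "sqrt_series (scaleC c x) = (\<Sum>k. scaleC c (sqrt_coeff k *\<^sub>R (id_minus_scaled ^^ k) x))"
      unfolding sqrt_series_def
      by (simp add: bounded_op_scaleC[OF C] scaleR_eq_scaleC scaleC_scaleC mult.commute)
    also have "\<dots> = scaleC c (sqrt_series x)"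
      unfolding sqrt_series_def
      by (rule bounded_op_suminf[OF bounded_op_scaleC_const summable_sqrt_series, symmetric])
    finally show ?thesis .
  qed
  moreover have "norm (sqrt_series x) \<le> norm x * suminf (\<lambda>k. \<bar>sqrt_coeff k\<bar>)" for x
  proof -
    have "norm (sqrt_series x) \<le> (\<Sum>k. norm (sqrt_coeff k *\<^sub>R (id_minus_scaled ^^ k) x))"
      unfolding sqrt_series_def by (rule summable_norm[OF summable_norm_sqrt_series])
    also have "\<dots> \<le> (\<Sum>k. \<bar>sqrt_coeff k\<bar> * norm x)"
      by (rule suminf_le[OF norm_sqrt_series_term_le summable_norm_sqrt_series
            summable_mult2[OF summable_abs_sqrt_coeff]])
    finally show ?thesis using suminf_mult2[OF summable_abs_sqrt_coeff] by (simp add: mult.commute)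
  qed
  ultimately show ?thesis unfolding bounded_op_def by blast
qed

lemma sqrt_series_self_adjoint: "cinner (sqrt_series x) y = cinner x (sqrt_series y)"
proof -
  have "cinner (sqrt_series x) y = (\<Sum>k. cinner (sqrt_coeff k *\<^sub>R (id_minus_scaled ^^ k) x) y)"
    unfolding sqrt_series_def by (rule cinner_suminf_left[OF summable_sqrt_series])
  also have "\<dots> = (\<Sum>k. cinner x (sqrt_coeff k *\<^sub>R (id_minus_scaled ^^ k) y))"
    by (simp add: scaleR_eq_scaleC cinner_scaleC_left cinner_scaleC_right
        funpow_self_adjoint[OF id_minus_scaled_self_adjoint])
  also have "\<dots> = cinner x (sqrt_series y)"
    unfolding sqrt_series_def by (rule cinner_suminf_right[OF summable_sqrt_series, symmetric])
  finally show ?thesis .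
qed

lemma sqrt_series_commute:
  assumes "bounded_op B" and "\<And>x. B (A x) = A (B x)"
  shows "B (sqrt_series x) = sqrt_series (B x)"
proof -
  have "B ((id_minus_scaled ^^ k) y) = (id_minus_scaled ^^ k) (B y)" for k y
    by (rule funpow_commute) (rule id_minus_scaled_commute[OF assms])
  then show ?thesis
    unfolding sqrt_series_def
    by (simp add: bounded_op_suminf[OF assms(1) summable_sqrt_series] bounded_op_scaleR[OF
        assms(1)])
qed

lemma sqrt_series_square: "sqrt_series (sqrt_series x) = scaleC (complex_of_real (1/K)) (A x)"
proof -
  define v where "v n = (id_minus_scaled ^^ n) x" for n
  have power_term: "sqrt_coeff k *\<^sub>R (id_minus_scaled ^^ k) (sqrt_series x)
      = (\<Sum>j. (sqrt_coeff k * sqrt_coeff j) *\<^sub>R v (k + j))" for k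
  proof -
    have "bounded_op (\<lambda>y. sqrt_coeff k *\<^sub>R (id_minus_scaled ^^ k) y)"
      unfolding scaleR_eq_scaleC
      by (rule bounded_op_compose[OF bounded_op_scaleC_const bounded_op_funpow[OF
          bounded_op_id_minus_scaled]])
    from bounded_op_suminf[OF this summable_sqrt_series] show ?thesis
      by (simp add: sqrt_series_def v_def bounded_op_scaleR[OF bounded_op_funpow[OF
          bounded_op_id_minus_scaled]]
          funpow_add)
  qed
  have "sqrt_series (sqrt_series x) = (\<Sum>k. \<Sum>j. (sqrt_coeff k * sqrt_coeff j) *\<^sub>R v (k + j))"
    unfolding sqrt_series_def[of "sqrt_series x"] power_term ..
  also have "\<dots> = (\<Sum>n. (\<Sum>k\<le>n. sqrt_coeff k * sqrt_coeff (n - k)) *\<^sub>R v n)"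
    by (rule suminf_scaleR_Cauchy_product[OF summable_abs_sqrt_coeff summable_abs_sqrt_coeff,
          where M="norm x"])
      (simp add: v_def norm_funpow_le[OF norm_id_minus_scaled_le])
  also have "\<dots> = (\<Sum>n\<in>{0, 1}. (\<Sum>k\<le>n. sqrt_coeff k * sqrt_coeff (n - k)) *\<^sub>R v n)"
    by (rule suminf_finite) (auto simp: sqrt_coeff_convolution)
  also have "\<dots> = x - id_minus_scaled x"
    by (simp add: sqrt_coeff_convolution v_def)
  finally show ?thesis by (simp add: id_minus_scaled_def)
qed

lemma sqrt_series_nonneg: "0 \<le> Re (cinner (sqrt_series x) x)"
proof -
  have "summable (\<lambda>k. cinner (sqrt_coeff k *\<^sub>R (id_minus_scaled ^^ k) x) x)"
    using bounded_bilinear.bounded_linear_left[OF bounded_bilinear_cinner]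
    by (rule bounded_linear.summable[OF _ summable_sqrt_series])
  then have summable:
    "summable (\<lambda>k. complex_of_real (sqrt_coeff k) * cinner ((id_minus_scaled ^^ k) x) x)"
    by (simp add: scaleR_eq_scaleC cinner_scaleC_left)
  have "Re (cinner (sqrt_series x) x)
      = (\<Sum>k. sqrt_coeff k * Re (cinner ((id_minus_scaled ^^ k) x) x))"
    unfolding sqrt_series_def cinner_suminf_left[OF summable_sqrt_series]
    by (simp add: scaleR_eq_scaleC cinner_scaleC_left Re_suminf[OF summable])
  \<comment> \<open>all coefficients but the first are nonpositive, and C is a contraction\<close>
  also have "\<dots> \<ge> (\<Sum>k. sqrt_coeff k * (norm x)\<^sup>2)"
  proof (rule suminf_le)
    show "sqrt_coeff k * (norm x)\<^sup>2 \<le> sqrt_coeff k * Re (cinner ((id_minus_scaled ^^ k) x) x)" for k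
    proof (cases "k = 0")
      case False
      have "Re (cinner ((id_minus_scaled ^^ k) x) x) \<le> norm ((id_minus_scaled ^^ k) x) * norm x"
        using cinner_cauchy_schwarz complex_Re_le_cmod order_trans by blast
      also have "\<dots> \<le> (norm x)\<^sup>2"
        using norm_funpow_le[OF norm_id_minus_scaled_le]
        by (simp add: power2_eq_square mult_right_mono)
      finally show ?thesis using sqrt_coeff_nonpos[of k] False by (simp add: mult_left_mono_neg)
    qed (simp add: cinner_self)
    show "summable (\<lambda>k. sqrt_coeff k * (norm x)\<^sup>2)"
      by (rule summable_mult2[OF summable_sqrt_coeff])
    show "summable (\<lambda>k. sqrt_coeff k * Re (cinner ((id_minus_scaled ^^ k) x) x))"
      using summable_Re[OF summable] by simp
  qed
  also have "(\<Sum>k. sqrt_coeff k * (norm x)\<^sup>2) = suminf sqrt_coeff * (norm x)\<^sup>2"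
    by (rule suminf_mult2[OF summable_sqrt_coeff, symmetric])
  finally show ?thesis
    using mult_nonneg_nonneg[OF suminf_sqrt_coeff_nonneg zero_le_power2[of "norm x"]] by linarith
qed

definition positive_sqrt :: "'a \<Rightarrow> 'a" where
  "positive_sqrt x = scaleC (complex_of_real (sqrt K)) (sqrt_series x)"

lemma positive_op_positive_sqrt: "positive_op positive_sqrt"
  unfolding positive_op_def positive_sqrt_def
  using bounded_op_compose[OF bounded_op_scaleC_const bounded_op_sqrt_series]
    self_adjoint_cinner_real[OF sqrt_series_self_adjoint] sqrt_series_nonneg K
  by (simp add: cinner_scaleC_left)

lemma positive_sqrt_square: "positive_sqrt (positive_sqrt x) = A x"
  using K by (simp add: positive_sqrt_def bounded_op_scaleC[OF bounded_op_sqrt_series] scaleC_scaleC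
      sqrt_series_square of_real_mult[symmetric] scaleC_one del: of_real_mult)

lemma positive_sqrt_commute:
  "bounded_op B \<Longrightarrow> (\<And>x. B (A x) = A (B x)) \<Longrightarrow> B (positive_sqrt x) = positive_sqrt (B x)"
  unfolding positive_sqrt_def by (simp add: bounded_op_scaleC sqrt_series_commute)

text \<open>A positive square root B of A commutes with A, hence with positive_sqrt;
  then y = B x - positive_sqrt x satisfies B y = - positive_sqrt y, which forces both to vanish.\<close>

lemma positive_sqrt_unique:
  assumes B: "positive_op B" and BB: "\<And>x. B (B x) = A x"
  shows "B x = positive_sqrt x"
proof -
  have bB: "bounded_op B" using B by (rule positive_op_bounded)
  have R: "positive_op positive_sqrt" by (rule positive_op_positive_sqrt)
  have comm: "B (A z) = A (B z)" for z using BB[of "B z"] BB[of z] by simp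
  define y where "y = B x - positive_sqrt x"
  have "B y + positive_sqrt y = 0"
    unfolding y_def using positive_sqrt_commute[of B x, OF bB comm] BB[of x]
        positive_sqrt_square[of x]
    by (simp add: bounded_op_diff[OF bB] bounded_op_diff[OF positive_op_bounded[OF R]])
  then have By: "B y = - positive_sqrt y" by (simp add: eq_neg_iff_add_eq_0)
  have "Re (cinner (B y) y) = - Re (cinner (positive_sqrt y) y)" by (simp add: By cinner_minus_left)
  then have "Re (cinner (B y) y) = 0"
    using positive_op_nonneg[OF B, of y] positive_op_nonneg[OF R, of y] by linarith
  moreover obtain KB where "\<And>x. norm (B x) \<le> norm x * KB" using bounded_op_bound[OF bB] by blast
  ultimately have B0: "B y = 0" using positive_op_norm_square_le[OF B, of KB y] by simp
  have "cinner y y = cinner (B x) y - cinner (positive_sqrt x) y"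
    unfolding y_def by (simp add: cinner_diff_left)
  also have "\<dots> = cinner x (B y) - cinner x (positive_sqrt y)"
    by (simp add: positive_op_self_adjoint[OF B] positive_op_self_adjoint[OF R])
  finally have "y = 0" using B0 By by (simp add: cinner_self_eq_zero)
  then show ?thesis unfolding y_def by simp
qed

lemma op_sqrt_eq_positive_sqrt: "op_sqrt A = positive_sqrt"
  unfolding op_sqrt_def
proof (rule the_equality)
  show "positive_op positive_sqrt \<and> positive_sqrt \<circ> positive_sqrt = A"
    using positive_op_positive_sqrt positive_sqrt_square by (auto simp: o_def)
  fix B assume "positive_op B \<and> B \<circ> B = A"
  then show "B = positive_sqrt" using positive_sqrt_unique by (auto simp: fun_eq_iff)
qed

end

lemma positive_op_op_sqrt: "positive_op A \<Longrightarrow> positive_op (op_sqrt A)"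
  using bounded_op_bound[OF positive_op_bounded] op_sqrt_eq_positive_sqrt positive_op_positive_sqrt
  by metis

lemma op_sqrt_square: "positive_op A \<Longrightarrow> op_sqrt A (op_sqrt A x) = A x"
  using bounded_op_bound[OF positive_op_bounded] op_sqrt_eq_positive_sqrt positive_sqrt_square
  by metis

section \<open>The A-seminorm\<close>

lemma A_norm_nonneg: "positive_op A \<Longrightarrow> 0 \<le> A_norm A v"
  unfolding A_norm_def by (simp add: positive_op_nonneg)

lemma A_norm_scaleC:
  assumes A: "bounded_op A"
  shows "A_norm A (scaleC a v) = cmod a * A_norm A v"
proof -
  have "cinner (A (scaleC a v)) (scaleC a v) = (a * cnj a) * cinner (A v) v"
    by (simp add: bounded_op_scaleC[OF A] cinner_scaleC_left cinner_scaleC_right mult_ac)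
  also have "a * cnj a = complex_of_real ((cmod a)\<^sup>2)" using complex_norm_square[of a] by simp
  finally have "Re (cinner (A (scaleC a v)) (scaleC a v)) = (cmod a)\<^sup>2 * Re (cinner (A v) v)" by
      simp
  then show ?thesis unfolding A_norm_def by (simp add: real_sqrt_mult)
qed

lemma positive_op_kernel_iff_orthogonal_range:
  assumes A: "positive_op A"
  shows "(\<forall>z\<in>range A. cinner w z = 0) \<longleftrightarrow> A w = 0"
proof
  assume "\<forall>z\<in>range A. cinner w z = 0"
  then have "cinner (A w) u = 0" for u using positive_op_self_adjoint[OF A, of w u] by simp
  then show "A w = 0" by (rule cinner_eq_zeroI)
qed (use positive_op_self_adjoint[OF A, of w] in auto)

lemma A_norm_add_kernel:
  assumes A: "positive_op A" and w: "A w = 0"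
  shows "A_norm A (v + w) = A_norm A v"
  using w positive_op_self_adjoint[OF A, of v w]
  by (simp add: A_norm_def bounded_op_add[OF positive_op_bounded[OF A]] cinner_add_right)

lemma A_norm_le_norm:
  assumes K: "K > 0" "\<And>x. norm (A x) \<le> norm x * K"
  shows "A_norm A v \<le> sqrt K * norm v"
proof -
  have "Re (cinner (A v) v) \<le> norm (A v) * norm v"
    using cinner_cauchy_schwarz[of "A v" v] complex_Re_le_cmod order_trans by blast
  also have "\<dots> \<le> norm v * K * norm v" using K by (simp add: mult_right_mono)
  also have "\<dots> = (sqrt K * norm v)\<^sup>2" using K by (simp add: power_mult_distrib power2_eq_square)
  finally have "sqrt (Re (cinner (A v) v)) \<le> sqrt ((sqrt K * norm v)\<^sup>2)" by (rule real_sqrt_le_mono)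
  then show ?thesis unfolding A_norm_def using K by simp
qed

lemma norm_A_le_A_norm:
  assumes A: "positive_op A" and K: "K > 0" "\<And>x. norm (A x) \<le> norm x * K"
  shows "norm (A v) \<le> sqrt K * A_norm A v"
proof (rule power2_le_imp_le)
  have "(norm (A v))\<^sup>2 \<le> K * Re (cinner (A v) v)" by (rule positive_op_norm_square_le[OF A K(2)])
  also have "\<dots> = (sqrt K * A_norm A v)\<^sup>2"
    unfolding A_norm_def using K(1) positive_op_nonneg[OF A, of v] by (simp add: power_mult_distrib)
  finally show "(norm (A v))\<^sup>2 \<le> (sqrt K * A_norm A v)\<^sup>2" .
  show "0 \<le> sqrt K * A_norm A v" using A_norm_nonneg[OF A, of v] K(1) by simp
qed

text \<open>The bounded inverse of A on its closed range gives y = A x with norm x \<le> L norm y;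
  then norm y ^ 2 = cinner x (A y) \<le> L norm y norm (A y).\<close>

lemma norm_le_A_norm_on_closed_range:
  assumes A: "positive_op A" and closed: "closed (range A)"
  obtains c where "c > 0" "\<And>y. y \<in> range A \<Longrightarrow> norm y \<le> c * A_norm A y"
proof -
  obtain L where L: "L > 0" "\<forall>y\<in>range A. \<exists>x. A x = y \<and> norm x \<le> L * norm y"
    using closed_range_bounded_preimage[OF bounded_op_bounded_linear[OF positive_op_bounded[OF A]]
        closed]
    by blast
  obtain K where K: "K > 0" "\<And>x. norm (A x) \<le> norm x * K"
    using bounded_op_bound[OF positive_op_bounded[OF A]] by blast
  have "norm y \<le> (L * sqrt K) * A_norm A y" if y: "y \<in> range A" for y
  proof -
    obtain x where x: "A x = y" "norm x \<le> L * norm y" using L(2) y by blast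
    have yy: "cinner x (A y) = cinner y y"
      using x(1) positive_op_self_adjoint[OF A, of x y] by simp
    have "(norm y)\<^sup>2 = Re (cinner x (A y))" by (simp add: yy cinner_self)
    also have "\<dots> \<le> norm x * norm (A y)"
      using cinner_cauchy_schwarz[of x "A y"] complex_Re_le_cmod order_trans by blast
    also have "\<dots> \<le> (L * norm y) * norm (A y)" using x(2) by (simp add: mult_right_mono)
    finally have "norm y * norm y \<le> norm y * (L * norm (A y))"
      by (simp add: power2_eq_square ac_simps)
    then have "norm y \<le> L * norm (A y)"
      using L(1) by (cases "y = 0") (auto dest: mult_left_le_imp_le)
    also have "\<dots> \<le> L * (sqrt K * A_norm A y)"
      using norm_A_le_A_norm[OF A K, of y] L(1) by (simp add: mult_left_mono)
    finally show ?thesis by (simp add: mult_ac)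
  qed
  moreover have "L * sqrt K > 0" using L K by simp
  ultimately show ?thesis using that by blast
qed

lemma bdd_above_A_opnorm:
  assumes A: "positive_op A" and closed: "closed (range A)" and T: "bounded_op T"
  shows "bdd_above {A_norm A (T x) | x. x \<in> closure (range A) \<and> A_norm A x = 1}"
proof -
  obtain c where c: "\<And>y. y \<in> range A \<Longrightarrow> norm y \<le> c * A_norm A y"
    using norm_le_A_norm_on_closed_range[OF A closed] by metis
  obtain K where K: "K > 0" "\<And>x. norm (A x) \<le> norm x * K"
    using bounded_op_bound[OF positive_op_bounded[OF A]] by blast
  obtain KT where KT: "KT > 0" "\<And>x. norm (T x) \<le> norm x * KT"
    using bounded_op_bound[OF T] by blast
  have "A_norm A (T x) \<le> sqrt K * (c * KT)" if "x \<in> range A" "A_norm A x = 1" for x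
  proof -
    have "A_norm A (T x) \<le> sqrt K * norm (T x)" by (rule A_norm_le_norm[OF K])
    also have "\<dots> \<le> sqrt K * (c * KT)"
    proof (rule mult_left_mono)
      show "norm (T x) \<le> c * KT"
        using KT(2)[of x] mult_right_mono[OF c[OF that(1)] less_imp_le[OF KT(1)]] that(2) by simp
    qed (use K in simp)
    finally show ?thesis .
  qed
  then show ?thesis using closure_closed[OF closed]
    by (intro bdd_aboveI[where M="sqrt K * (c * KT)"]) auto
qed

lemma A_norm_le_A_opnorm:
  assumes A: "positive_op A" and closed: "closed (range A)" and T: "bounded_op T"
    and x: "x \<in> range A"
  shows "A_norm A (T x) \<le> A_opnorm A T * A_norm A x"
proof -
  obtain c where c: "\<And>y. y \<in> range A \<Longrightarrow> norm y \<le> c * A_norm A y"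
    using norm_le_A_norm_on_closed_range[OF A closed] by metis
  show ?thesis
  proof (cases "A_norm A x = 0")
    case True
    then show ?thesis using c[OF x] bounded_op_zero[OF T] by (simp add: A_norm_def)
  next
    case False
    define a where "a = A_norm A x"
    have a: "a > 0" using False A_norm_nonneg[OF A, of x] unfolding a_def by simp
    define x' where "x' = scaleC (complex_of_real (1/a)) x"
    have "x' \<in> range A"
      using x csubspace_range[OF positive_op_bounded[OF A]] unfolding x'_def csubspace_def by blast
    moreover have "A_norm A x' = 1"
      using a by (simp add: x'_def a_def A_norm_scaleC[OF positive_op_bounded[OF A]] norm_divide)
    ultimately have "A_norm A (T x') \<le> A_opnorm A T"
      unfolding A_opnorm_def using closure_closed[OF closed]
      by (intro cSup_upper[OF _ bdd_above_A_opnorm[OF A closed T]]) auto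
    moreover have "A_norm A (T x') = A_norm A (T x) / a"
      using a by (simp add: x'_def bounded_op_scaleC[OF T] A_norm_scaleC[OF positive_op_bounded[OF
          A]]
          norm_divide)
    ultimately show ?thesis using a by (simp add: a_def field_simps)
  qed
qed

lemma A_opnorm_nonneg:
  assumes A: "positive_op A" and closed: "closed (range A)" and A0: "A \<noteq> (\<lambda>x. 0)"
    and T: "bounded_op T"
  shows "0 \<le> A_opnorm A T"
proof -
  obtain c where c: "c > 0" "\<And>y. y \<in> range A \<Longrightarrow> norm y \<le> c * A_norm A y"
    using norm_le_A_norm_on_closed_range[OF A closed] by metis
  obtain u where "A u \<noteq> 0" using A0 by auto
  moreover have "norm (A u) \<le> c * A_norm A (A u)" by (rule c(2)) simp
  ultimately have "0 < A_norm A (A u)"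
    using A_norm_nonneg[OF A, of "A u"] by (metis less_eq_real_def mult_zero_right norm_le_zero_iff)
  then have "0 \<le> A_opnorm A T * A_norm A (A u)"
    using A_norm_le_A_opnorm[OF A closed T, of "A u"] A_norm_nonneg[OF A, of "T (A u)"] by simp
  then show ?thesis using \<open>0 < A_norm A (A u)\<close> by (simp add: zero_le_mult_iff)
qed

section \<open>The class B_{A^{1/2}}\<close>

lemma B_Ahalf_bounded: "T \<in> B_Ahalf A \<Longrightarrow> bounded_op T"
  unfolding B_Ahalf_def by blast

lemma B_Ahalf_adjoint_range: "T \<in> B_Ahalf A \<Longrightarrow> adjoint T (op_sqrt A y) \<in> range (op_sqrt A)"
  unfolding B_Ahalf_def by auto

text \<open>ker A = ker A^{1/2}, and the adjoint of T preserves the range of A^{1/2}.\<close>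

lemma B_Ahalf_kernel_invariant:
  assumes A: "positive_op A" and T: "T \<in> B_Ahalf A" and n: "A n = 0"
  shows "A (T n) = 0"
proof -
  note B = positive_op_op_sqrt[OF A] op_sqrt_square[OF A]
  have "cinner (op_sqrt A n) (op_sqrt A n) = cinner (A n) n"
    using positive_op_self_adjoint[OF B(1), of "op_sqrt A n" n] B(2) by simp
  then have Bn: "op_sqrt A n = 0" using n by (simp add: cinner_self_eq_zero)
  have "cinner (T n) z = 0" if "z \<in> range A" for z
  proof -
    obtain u where z: "z = op_sqrt A (op_sqrt A u)" using \<open>z \<in> range A\<close> B(2) by auto
    obtain y where y: "adjoint T (op_sqrt A (op_sqrt A u)) = op_sqrt A y"
      using B_Ahalf_adjoint_range[OF T] by blast
    have "cinner (T n) z = cinner n (op_sqrt A y)"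
      using cinner_adjoint[OF B_Ahalf_bounded[OF T]] z y by simp
    also have "\<dots> = 0" using positive_op_self_adjoint[OF B(1), of n y] Bn by simp
    finally show ?thesis .
  qed
  then show ?thesis using positive_op_kernel_iff_orthogonal_range[OF A] by blast
qed

lemma B_Ahalf_shift:
  assumes A: "positive_op A" and T: "T \<in> B_Ahalf A"
  shows "(\<lambda>x. scaleC l x - T x) \<in> B_Ahalf A"
proof -
  have T': "bounded_op T" by (rule B_Ahalf_bounded[OF T])
  have S: "bounded_op (\<lambda>x. scaleC l x - T x)"
    by (rule bounded_op_diff_fun[OF bounded_op_scaleC_const T'])
  have adj: "adjoint (\<lambda>x. scaleC l x - T x) = (\<lambda>y. scaleC (cnj l) y - adjoint T y)"
    by (rule adjoint_eqI) (simp add: cinner_diff_left cinner_diff_right cinner_scaleC_left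
        cinner_scaleC_right cinner_adjoint[OF T'])
  have "adjoint (\<lambda>x. scaleC l x - T x) (op_sqrt A y) \<in> range (op_sqrt A)" for y
  proof -
    obtain z where z: "adjoint T (op_sqrt A y) = op_sqrt A z"
      using B_Ahalf_adjoint_range[OF T] by blast
    have B: "bounded_op (op_sqrt A)"
      by (rule positive_op_bounded[OF positive_op_op_sqrt[OF A]])
    have "adjoint (\<lambda>x. scaleC l x - T x) (op_sqrt A y) = op_sqrt A (scaleC (cnj l) y - z)"
      unfolding adj z by (simp add: bounded_op_diff[OF B] bounded_op_scaleC[OF B])
    then show ?thesis by simp
  qed
  then show ?thesis unfolding B_Ahalf_def using S by auto
qed

text \<open>The adjoint of R maps into (ker R)^\<bottom> \<subseteq> (ker A)^\<bottom> = range A \<subseteq> range A^{1/2}.\<close>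

lemma B_Ahalf_if_kernel_subset:
  assumes A: "positive_op A" and closed: "closed (range A)" and R: "bounded_op R"
    and ker: "\<And>n. A n = 0 \<Longrightarrow> R n = 0"
  shows "R \<in> B_Ahalf A"
proof -
  have "adjoint R (op_sqrt A y) \<in> range (op_sqrt A)" for y
  proof -
    have "adjoint R (op_sqrt A y) \<in> range A"
    proof (rule closed_csubspace_double_orthogonal[OF csubspace_range[OF positive_op_bounded[OF
        A]] closed])
      fix n assume "\<And>z. z \<in> range A \<Longrightarrow> cinner n z = 0"
      then have "R n = 0" using ker positive_op_kernel_iff_orthogonal_range[OF A] by blast
      then show "cinner n (adjoint R (op_sqrt A y)) = 0"
        using cinner_adjoint[OF R, of n "op_sqrt A y"] by simp
    qed
    then obtain u where "adjoint R (op_sqrt A y) = A u" by blast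
    then show ?thesis using op_sqrt_square[OF A, of u] by (metis range_eqI)
  qed
  then show ?thesis unfolding B_Ahalf_def using R by auto
qed

section \<open>Projection onto the range of A\<close>

context
  fixes A :: "'a::chilbert_space \<Rightarrow> 'a"
  assumes A: "positive_op A" and closed: "closed (range A)"
begin

lemma csubspace_range_A: "csubspace (range A)"
  by (rule csubspace_range[OF positive_op_bounded[OF A]])

lemma bounded_op_proj_range: "bounded_op (proj (range A))"
  by (rule bounded_op_proj[OF csubspace_range_A closed])

lemma kernel_diff_proj_range: "A (x - proj (range A) x) = 0"
  using proj_orthogonal[OF csubspace_range_A closed] positive_op_kernel_iff_orthogonal_range[OF A]
  by blast

lemma A_proj_range: "A (proj (range A) x) = A x"
  using kernel_diff_proj_range[of x] bounded_op_diff[OF positive_op_bounded[OF A]] by simp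

lemma proj_range_kernel: "A n = 0 \<Longrightarrow> proj (range A) n = 0"
  by (rule proj_orthogonal_zero[OF csubspace_range_A closed])
    (use positive_op_kernel_iff_orthogonal_range[OF A] in blast)

lemma A_norm_proj_range: "A_norm A (proj (range A) x) = A_norm A x"
  using A_norm_add_kernel[OF A kernel_diff_proj_range, of "proj (range A) x" x] by simp

lemma proj_range_B_Ahalf:
  assumes T: "T \<in> B_Ahalf A"
  shows "proj (range A) (T (proj (range A) x)) = proj (range A) (T x)"
proof -
  have "proj (range A) (T (x - proj (range A) x)) = 0"
    by (rule proj_range_kernel[OF B_Ahalf_kernel_invariant[OF A T kernel_diff_proj_range]])
  then show ?thesis
    by (simp add: bounded_op_diff[OF B_Ahalf_bounded[OF T]]
        bounded_op_diff[OF bounded_op_proj_range])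
qed

end

section \<open>Neumann series\<close>

definition neumann_series :: "('a::chilbert_space \<Rightarrow> 'a) \<Rightarrow> complex \<Rightarrow> 'a \<Rightarrow> 'a" where
  "neumann_series U l y = scaleC (1 / l) (\<Sum>n. scaleC (1 / l ^ n) ((U ^^ n) y))"

lemma norm_neumann_term_le:
  assumes U: "\<And>n. norm ((U ^^ n) y) \<le> D * r ^ n" and l: "l \<noteq> 0"
  shows "norm (scaleC (1 / l ^ n) ((U ^^ n) y)) \<le> D * (r / cmod l) ^ n"
  using divide_right_mono[OF U[of n], of "cmod l ^ n"] l
  by (simp add: norm_scaleC norm_divide norm_power power_divide)

lemma summable_norm_neumann_series:
  assumes U: "\<And>n. norm ((U ^^ n) y) \<le> D * r ^ n" and r: "0 \<le> r" "r < cmod l"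
  shows "summable (\<lambda>n. norm (scaleC (1 / l ^ n) ((U ^^ n) y)))"
proof (rule summable_comparison_test'[OF summable_mult[OF summable_geometric]])
  show "norm (norm (scaleC (1 / l ^ n) ((U ^^ n) y))) \<le> D * (r / cmod l) ^ n" for n
  proof -
    have "l \<noteq> 0" using r by auto
    then show ?thesis using norm_neumann_term_le[OF U] by simp
  qed
qed (use r in \<open>simp add: divide_less_eq\<close>)

lemma norm_neumann_series_le:
  assumes U: "\<And>n. norm ((U ^^ n) y) \<le> D * r ^ n" and r: "0 \<le> r" "r < cmod l"
  shows "norm (neumann_series U l y) \<le> D / (cmod l - r)"
proof -
  have l: "l \<noteq> 0" using r by auto
  have q: "norm (r / cmod l) < 1" using r by (simp add: divide_less_eq)
  have "norm (\<Sum>n. scaleC (1 / l ^ n) ((U ^^ n) y)) \<le> (\<Sum>n. norm (scaleC (1 / l ^ n) ((U ^^ n) y)))"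
    by (rule summable_norm[OF summable_norm_neumann_series[OF U r]])
  also have "\<dots> \<le> (\<Sum>n. D * (r / cmod l) ^ n)"
    by (rule suminf_le[OF norm_neumann_term_le[OF U l] summable_norm_neumann_series[OF U r]
          summable_mult[OF summable_geometric[OF q]]])
  also have "\<dots> = D * (1 / (1 - r / cmod l))"
    using suminf_mult[OF summable_geometric[OF q], of D] suminf_geometric[OF q] by simp
  also have "\<dots> = cmod l * (D / (cmod l - r))" using l r by (simp add: field_simps)
  finally show ?thesis
    using l by (simp add: neumann_series_def norm_scaleC norm_divide divide_le_eq mult.commute)
qed

context
  fixes U :: "'a::chilbert_space \<Rightarrow> 'a" and l :: complex
  assumes U: "bounded_op U"
begin

lemma neumann_series_add:
  assumes "summable (\<lambda>n. scaleC (1 / l ^ n) ((U ^^ n) y))"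
    and "summable (\<lambda>n. scaleC (1 / l ^ n) ((U ^^ n) z))"
  shows "neumann_series U l (y + z) = neumann_series U l y + neumann_series U l z"
proof -
  have "(\<Sum>n. scaleC (1 / l ^ n) ((U ^^ n) (y + z)))
      = (\<Sum>n. scaleC (1 / l ^ n) ((U ^^ n) y) + scaleC (1 / l ^ n) ((U ^^ n) z))"
    by (simp add: bounded_op_add[OF bounded_op_funpow[OF U]] scaleC_add_right)
  also have "\<dots> = (\<Sum>n. scaleC (1 / l ^ n) ((U ^^ n) y)) + (\<Sum>n. scaleC (1 / l ^ n) ((U ^^ n) z))"
    by (rule suminf_add[OF assms, symmetric])
  finally show ?thesis by (simp add: neumann_series_def scaleC_add_right)
qed

lemma neumann_series_scaleC:
  assumes "summable (\<lambda>n. scaleC (1 / l ^ n) ((U ^^ n) y))"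
  shows "neumann_series U l (scaleC c y) = scaleC c (neumann_series U l y)"
proof -
  have "(\<Sum>n. scaleC (1 / l ^ n) ((U ^^ n) (scaleC c y)))
      = (\<Sum>n. scaleC c (scaleC (1 / l ^ n) ((U ^^ n) y)))"
    by (simp add: bounded_op_scaleC[OF bounded_op_funpow[OF U]] scaleC_scaleC mult.commute)
  also have "\<dots> = scaleC c (\<Sum>n. scaleC (1 / l ^ n) ((U ^^ n) y))"
    by (rule bounded_op_suminf[OF bounded_op_scaleC_const assms, symmetric])
  finally show ?thesis by (simp add: neumann_series_def scaleC_scaleC mult.commute)
qed

lemma neumann_series_commute:
  assumes "summable (\<lambda>n. scaleC (1 / l ^ n) ((U ^^ n) y))"
  shows "neumann_series U l (U y) = U (neumann_series U l y)"
proof -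
  have "(\<Sum>n. scaleC (1 / l ^ n) ((U ^^ n) (U y))) = (\<Sum>n. U (scaleC (1 / l ^ n) ((U ^^ n) y)))"
    by (simp add: bounded_op_scaleC[OF U] funpow_swap1)
  also have "\<dots> = U (\<Sum>n. scaleC (1 / l ^ n) ((U ^^ n) y))"
    by (rule bounded_op_suminf[OF U assms, symmetric])
  finally show ?thesis by (simp add: neumann_series_def bounded_op_scaleC[OF U])
qed

lemma neumann_series_inverse:
  assumes l: "l \<noteq> 0" and S: "summable (\<lambda>n. scaleC (1 / l ^ n) ((U ^^ n) y))"
  shows "scaleC l (neumann_series U l y) - U (neumann_series U l y) = y"
proof -
  define a where "a n = scaleC (1 / l ^ n) ((U ^^ n) y)" for n
  have "scaleC l (neumann_series U l y) = (\<Sum>n. a n)"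
    using l by (simp add: neumann_series_def a_def scaleC_scaleC scaleC_one)
  moreover have "U (neumann_series U l y) = (\<Sum>n. a (Suc n))"
  proof -
    have "U (a n) = scaleC l (a (Suc n))" for n
      using l by (simp add: a_def bounded_op_scaleC[OF U] scaleC_scaleC field_simps)
    then have "U (\<Sum>n. a n) = scaleC l (\<Sum>n. a (Suc n))"
      using S unfolding a_def[symmetric]
      by (simp add: bounded_op_suminf[OF U] bounded_op_suminf[OF bounded_op_scaleC_const]
          summable_Suc_iff)
    then show ?thesis
      using l by (simp add: neumann_series_def a_def[symmetric] bounded_op_scaleC[OF U]
          scaleC_scaleC
          scaleC_one)
  qed
  moreover have "summable a" unfolding a_def by (rule S)
  moreover have "summable (\<lambda>n. a (Suc n))" using \<open>summable a\<close> by (simp add: summable_Suc_iff)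
  \<comment> \<open>the series telescopes, since a n \<longrightarrow> 0 and a 0 = y\<close>
  moreover have "(\<lambda>n. a n - a (Suc n)) sums y"
    using telescope_sums'[OF summable_LIMSEQ_zero[OF \<open>summable a\<close>]] by (simp add: a_def scaleC_one)
  ultimately show ?thesis by (metis suminf_diff sums_unique)
qed

end

context
  fixes A T :: "'a::chilbert_space \<Rightarrow> 'a" and l :: complex
  assumes A: "positive_op A" and A_nonzero: "A \<noteq> (\<lambda>x. 0)" and closed: "closed (range A)"
    and T: "T \<in> B_Ahalf A" and l: "cmod l > A_opnorm A T"
begin

definition compressed_op :: "'a \<Rightarrow> 'a" where
  "compressed_op x = proj (range A) (T x)"

definition A_resolvent_op :: "'a \<Rightarrow> 'a" where
  "A_resolvent_op x = neumann_series compressed_op l (proj (range A) x)"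

lemma bounded_op_compressed_op: "bounded_op compressed_op"
  unfolding compressed_op_def
  by (rule bounded_op_compose[OF bounded_op_proj_range[OF A closed] B_Ahalf_bounded[OF T]])

lemma A_opnorm_T_nonneg: "0 \<le> A_opnorm A T"
  by (rule A_opnorm_nonneg[OF A closed A_nonzero B_Ahalf_bounded[OF T]])

lemma l_nonzero: "l \<noteq> 0"
  using l A_opnorm_T_nonneg by auto

lemma compressed_op_power_in_range: "(compressed_op ^^ n) (proj (range A) x) \<in> range A"
  by (induction n) (simp_all add: compressed_op_def proj_in[OF csubspace_range_A[OF A closed]
      closed])

lemma A_norm_compressed_op_power_le:
  "A_norm A ((compressed_op ^^ n) (proj (range A) x)) \<le> A_opnorm A T ^ n * A_norm A x"
proof (induction n)
  case 0
  show ?case by (simp add: A_norm_proj_range[OF A closed])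
next
  case (Suc n)
  let ?y = "(compressed_op ^^ n) (proj (range A) x)"
  have "A_norm A ((compressed_op ^^ Suc n) (proj (range A) x)) = A_norm A (T ?y)"
    by (simp add: compressed_op_def A_norm_proj_range[OF A closed])
  also have "\<dots> \<le> A_opnorm A T * A_norm A ?y"
    by (rule A_norm_le_A_opnorm[OF A closed B_Ahalf_bounded[OF T] compressed_op_power_in_range])
  also have "\<dots> \<le> A_opnorm A T * (A_opnorm A T ^ n * A_norm A x)"
    by (rule mult_left_mono[OF Suc A_opnorm_T_nonneg])
  finally show ?case by (simp add: mult.assoc)
qed

lemma norm_compressed_op_power_le:
  obtains D where
    "\<And>x n. norm ((compressed_op ^^ n) (proj (range A) x)) \<le> (D * norm x) * A_opnorm A T ^ n"
proof -
  obtain c where c: "c > 0" "\<And>y. y \<in> range A \<Longrightarrow> norm y \<le> c * A_norm A y"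
    using norm_le_A_norm_on_closed_range[OF A closed] by metis
  obtain K where K: "K > 0" "\<And>x. norm (A x) \<le> norm x * K"
    using bounded_op_bound[OF positive_op_bounded[OF A]] by blast
  have "norm ((compressed_op ^^ n) (proj (range A) x)) \<le> (c * sqrt K * norm x) * A_opnorm A T ^ n"
      for x n
  proof -
    have "norm ((compressed_op ^^ n) (proj (range A) x)) \<le> c * (A_opnorm A T ^ n * A_norm A x)"
      using c(2)[OF compressed_op_power_in_range] mult_left_mono[OF A_norm_compressed_op_power_le]
        c(1) by (meson less_imp_le order_trans)
    also have "\<dots> \<le> c * (A_opnorm A T ^ n * (sqrt K * norm x))"
      using A_norm_le_norm[OF K, of x] c(1) A_opnorm_T_nonneg by (simp add: mult_left_mono)
    finally show ?thesis by (simp add: ac_simps)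
  qed
  then show ?thesis by (rule that)
qed

lemma summable_A_resolvent_op:
  "summable (\<lambda>n. scaleC (1 / l ^ n) ((compressed_op ^^ n) (proj (range A) x)))"
proof -
  obtain D where
    "\<And>x n. norm ((compressed_op ^^ n) (proj (range A) x)) \<le> (D * norm x) * A_opnorm A T ^ n"
    using norm_compressed_op_power_le by blast
  from summable_norm_neumann_series[OF this A_opnorm_T_nonneg l] show ?thesis
    by (rule summable_norm_cancel)
qed

lemma bounded_op_A_resolvent_op: "bounded_op A_resolvent_op"
proof -
  obtain D where D:
    "\<And>x n. norm ((compressed_op ^^ n) (proj (range A) x)) \<le> (D * norm x) * A_opnorm A T ^ n"
    using norm_compressed_op_power_le by blast
  have "A_resolvent_op (x + y) = A_resolvent_op x + A_resolvent_op y" for x y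
    using neumann_series_add[OF bounded_op_compressed_op summable_A_resolvent_op
        summable_A_resolvent_op]
    by (simp add: A_resolvent_op_def bounded_op_add[OF bounded_op_proj_range[OF A closed]])
  moreover have "A_resolvent_op (scaleC c x) = scaleC c (A_resolvent_op x)" for c x
    using neumann_series_scaleC[OF bounded_op_compressed_op summable_A_resolvent_op]
    by (simp add: A_resolvent_op_def bounded_op_scaleC[OF bounded_op_proj_range[OF A closed]])
  moreover have "norm (A_resolvent_op x) \<le> norm x * (D / (cmod l - A_opnorm A T))" for x
    using norm_neumann_series_le[OF D A_opnorm_T_nonneg l]
    by (simp add: A_resolvent_op_def mult.commute)
  ultimately show ?thesis unfolding bounded_op_def by blast
qed

lemma A_resolvent_op_right_inverse:
  "scaleC l (A_resolvent_op x) - compressed_op (A_resolvent_op x) = proj (range A) x"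
  unfolding A_resolvent_op_def
  by (rule neumann_series_inverse[OF bounded_op_compressed_op l_nonzero summable_A_resolvent_op])

lemma A_resolvent_op_left_inverse: "A_resolvent_op (scaleC l x - T x) = proj (range A) x"
proof -
  have "A_resolvent_op (T x) = neumann_series compressed_op l (compressed_op (proj (range A) x))"
    by (simp add: A_resolvent_op_def compressed_op_def proj_range_B_Ahalf[OF A closed T])
  also have "\<dots> = compressed_op (A_resolvent_op x)"
    unfolding A_resolvent_op_def
    by (rule neumann_series_commute[OF bounded_op_compressed_op summable_A_resolvent_op])
  finally have "A_resolvent_op (scaleC l x - T x)
      = scaleC l (A_resolvent_op x) - compressed_op (A_resolvent_op x)"
    by (simp add: bounded_op_diff[OF bounded_op_A_resolvent_op] bounded_op_scaleC[OF
        bounded_op_A_resolvent_op])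
  then show ?thesis by (simp add: A_resolvent_op_right_inverse)
qed

lemma A_resolvent_op_kernel: "A n = 0 \<Longrightarrow> A_resolvent_op n = 0"
  using bounded_op_zero[OF bounded_op_A_resolvent_op] bounded_op_zero[OF bounded_op_proj_range[OF
      A closed]]
  by (simp add: A_resolvent_op_def proj_range_kernel[OF A closed])

lemma A_resolvent_op_nonzero: "A_resolvent_op \<noteq> (\<lambda>x. 0)"
proof
  assume R: "A_resolvent_op = (\<lambda>x. 0)"
  obtain u where u: "A u \<noteq> 0" using A_nonzero by auto
  have "proj (range A) (A u) = A u"
    by (rule proj_fixes[OF csubspace_range_A[OF A closed] closed]) simp
  then show False
    using A_resolvent_op_right_inverse[of "A u"] R u bounded_op_zero[OF bounded_op_compressed_op]
        by simp
qed

lemma comp_shift_A_resolvent_op: "A \<circ> (\<lambda>x. scaleC l x - T x) \<circ> A_resolvent_op = A"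
proof
  fix x
  have "A (T (A_resolvent_op x)) = A (compressed_op (A_resolvent_op x))"
    unfolding compressed_op_def by (rule A_proj_range[OF A closed, symmetric])
  then have "A (scaleC l (A_resolvent_op x) - T (A_resolvent_op x))
      = A (scaleC l (A_resolvent_op x) - compressed_op (A_resolvent_op x))"
    by (simp add: bounded_op_diff[OF positive_op_bounded[OF A]])
  then show "(A \<circ> (\<lambda>x. scaleC l x - T x) \<circ> A_resolvent_op) x = A x"
    by (simp add: A_resolvent_op_right_inverse A_proj_range[OF A closed])
qed

lemma comp_A_resolvent_op_shift: "A \<circ> A_resolvent_op \<circ> (\<lambda>x. scaleC l x - T x) = A"
  by (simp add: fun_eq_iff A_resolvent_op_left_inverse A_proj_range[OF A closed])

end

theorem mainTheorem3:
  fixes A T :: "'a::chilbert_space \<Rightarrow> 'a" and l :: complex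
  assumes "positive_op A"
    and "A \<noteq> (\<lambda>x. 0)"
    and "closed (range A)"
    and "T \<in> B_Ahalf A"
    and "cmod l > A_opnorm A T"
  shows "l \<in> A_resolvent A T"
proof -
  have "(\<lambda>x. scaleC l x - T x) \<in> B_Ahalf A"
    by (rule B_Ahalf_shift[OF assms(1,4)])
  moreover have "A_resolvent_op A T l \<in> B_Ahalf A"
    by (rule B_Ahalf_if_kernel_subset[OF assms(1,3) bounded_op_A_resolvent_op[OF assms]
          A_resolvent_op_kernel[OF assms]])
  ultimately show ?thesis
    unfolding A_resolvent_def A_invertible_def
    using A_resolvent_op_nonzero[OF assms] comp_shift_A_resolvent_op[OF assms]
      comp_A_resolvent_op_shift[OF assms] by blast
qed

end
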